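(* Let $d_{\ell-1},d_\ell,d_{\ell+1}\ge 2$ and let $r_\ell\ge 2$ be an integer with $$r_\ell\ \ge\ 2\left\lceil\frac{2d_\ell-\min(d_\ell,d_{\ell+1})}{2\min(d_\ell,d_{\ell-1})-2}\right\rceil.$$ Then the two-layer hPNN architecture $((d_{\ell-1},d_\ell,d_{\ell+1}),(r_\ell))$ is identifiable.
   Context: Work over $\mathbb R$. $\rho_r(z_1,\dots,z_d)=(z_1^r,\dots,z_d^r)$. A two-layer hPNN with architecture $((d_0,d_1,d_2),(r_1))$ and weights $(W_1,W_2)$, $W_1\in\mathbb R^{d_1\times d_0}$, $W_2\in\mathbb R^{d_2\times d_1}$, is the map $\mathbf x\mapsto W_2\rho_{r_1}(W_1\mathbf x)$. Weights $(W_1',W_2')$ are equivalent to $(W_1,W_2)$ if $W_1'=PDW_1$ and $W_2'=W_2D^{-r_1}P^T$ for some permutation matrix $P$ and invertible diagonal matrix $D$. The representation is unique if every weight pair of the same architecture defining the same function is equivalent to it. The architecture is identifiable if the representation is unique for all weights outside a Lebesgue-null subset of the parameter space. *)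

theory Defs
  imports "HOL-Analysis.Analysis"
begin

definition rho :: "nat \<Rightarrow> real ^ 'n \<Rightarrow> real ^ 'n" where
  "rho r z = (\<chi> i. (z $ i) ^ r)"

definition hpnn2 :: "real ^ 'd0 ^ 'd1 \<Rightarrow> real ^ 'd1 ^ 'd2 \<Rightarrow> nat \<Rightarrow> real ^ 'd0 \<Rightarrow> real ^ 'd2" where
  "hpnn2 W1 W2 r x = W2 *v rho r (W1 *v x)"

definition is_perm_matrix :: "real ^ 'n ^ 'n \<Rightarrow> bool" where
  "is_perm_matrix P \<longleftrightarrow> (\<exists>\<sigma>. \<sigma> permutes (UNIV :: 'n set) \<and>
      P = (\<chi> i j. if j = \<sigma> i then 1 else 0))"

definition is_diag_matrix :: "real ^ 'n ^ 'n \<Rightarrow> bool" where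
  "is_diag_matrix D \<longleftrightarrow> (\<forall>i j. i \<noteq> j \<longrightarrow> D $ i $ j = 0)"

primrec matpow :: "real ^ 'n ^ 'n \<Rightarrow> nat \<Rightarrow> real ^ 'n ^ 'n" where
  "matpow A 0 = mat 1"
| "matpow A (Suc k) = A ** matpow A k"

definition hpnn2_equiv :: "nat \<Rightarrow> real ^ 'd0 ^ 'd1 \<Rightarrow> real ^ 'd1 ^ 'd2 \<Rightarrow>
    real ^ 'd0 ^ 'd1 \<Rightarrow> real ^ 'd1 ^ 'd2 \<Rightarrow> bool" where
  "hpnn2_equiv r W1' W2' W1 W2 \<longleftrightarrow>
     (\<exists>P D. is_perm_matrix P \<and> is_diag_matrix D \<and> invertible D \<and>
        W1' = P ** D ** W1 \<and> W2' = W2 ** matpow (matrix_inv D) r ** transpose P)"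

definition hpnn2_unique :: "nat \<Rightarrow> real ^ 'd0 ^ 'd1 \<Rightarrow> real ^ 'd1 ^ 'd2 \<Rightarrow> bool" where
  "hpnn2_unique r W1 W2 \<longleftrightarrow>
     (\<forall>W1' W2'. hpnn2 W1' W2' r = hpnn2 W1 W2 r \<longrightarrow> hpnn2_equiv r W1' W2' W1 W2)"

text \<open>Identifiability of architecture ((d0,d1,d2),(r)); dimensions are the cardinalities of the index types.\<close>
definition hpnn2_identifiable :: "('d0::finite) itself \<Rightarrow> ('d1::finite) itself \<Rightarrow> ('d2::finite) itself \<Rightarrow> nat \<Rightarrow> bool" where
  "hpnn2_identifiable _ _ _ r \<longleftrightarrow>
     (\<exists>N :: ((real ^ 'd0 ^ 'd1) \<times> (real ^ 'd1 ^ 'd2)) set. N \<in> null_sets lebesgue \<and>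
        (\<forall>W1 W2. (W1, W2) \<notin> N \<longrightarrow> hpnn2_unique r W1 W2))"

end

(*
  Write the network componentwise as x |-> (SUM j. W2 k j * (w_j . x)^r)_k, with w_j the rows of W1
  and c_j the columns of W2. Splitting r = p + q with p = r div 2 and polarizing, two networks
  with the same function have the same trilinear form
    (u, y, z) |-> SUM j. (c_j . u) * (w_j . y)^p * (w_j . z)^q.
  For generic weights the factor family {c_j} has Kruskal rank at least min(d1, d2) and both
  power families {(w_j . -)^p}, {(w_j . -)^q} have Kruskal rank at least min(d1, (d0 - 1) p + 1):
  each rank condition fails only on the zero set of a polynomial (a Gram determinant) that an
  explicit witness shows to be nonzero. The bound on r makes these ranks add up to at least 2 d1 + 2,
  so Kruskal's uniqueness theorem determines the factors up to a common permutation and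
  rescaling; matching the rescalings of the power factors yields W1' = P D W1 and
  W2' = W2 D^(-r) P^T.
*)
theory Submission
  imports Defs "HOL-Library.Function_Algebras"
begin

section \<open>Kruskal rank\<close>

definition kruskal_rank_ge :: "nat \<Rightarrow> ('r \<Rightarrow> 'a::real_vector) \<Rightarrow> bool" where
  "kruskal_rank_ge K v \<longleftrightarrow>
     (\<forall>S c. finite S \<longrightarrow> card S \<le> K \<longrightarrow> (\<Sum>r\<in>S. c r *\<^sub>R v r) = 0 \<longrightarrow> (\<forall>r\<in>S. c r = 0))"

lemma kruskal_rank_geD:
  "kruskal_rank_ge K v \<Longrightarrow> finite S \<Longrightarrow> card S \<le> K \<Longrightarrow> (\<Sum>r\<in>S. c r *\<^sub>R v r) = 0 \<Longrightarrow> r \<in> S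
    \<Longrightarrow> c r = 0"
  unfolding kruskal_rank_ge_def by blast

lemma kruskal_rank_ge_pair:
  assumes "kruskal_rank_ge K v" "2 \<le> K" "s \<noteq> t" "x *\<^sub>R v s + y *\<^sub>R v t = 0"
  shows "x = 0 \<and> y = 0"
proof -
  let ?c = "\<lambda>r. if r = s then x else y"
  have "(\<Sum>r\<in>{s,t}. ?c r *\<^sub>R v r) = 0" "card {s,t} \<le> K"
    using assms(2-4) by simp_all
  then show ?thesis
    using kruskal_rank_geD[OF assms(1), of "{s,t}" ?c] assms(3) by force
qed

lemma kruskal_rank_ge_nonzero:
  assumes "kruskal_rank_ge K v" "1 \<le> K"
  shows "v r \<noteq> 0"
  using kruskal_rank_geD[OF assms(1), of "{r}" "\<lambda>_. 1" r] assms(2) by auto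

lemma kruskal_rank_ge_inj_on:
  assumes "kruskal_rank_ge K v" "finite U" "card U \<le> K"
  shows "inj_on v U"
proof (rule inj_onI, rule ccontr)
  fix s t assume st: "s \<in> U" "t \<in> U" "v s = v t" "s \<noteq> t"
  have "card {s, t} \<le> card U" using st assms(2) by (intro card_mono) auto
  then have "2 \<le> K" using st(4) assms(3) by simp
  then show False using kruskal_rank_ge_pair[OF assms(1) _ st(4), of 1 "-1"] st(3) by simp
qed

lemma kruskal_rank_ge_not_in_span:
  assumes "kruskal_rank_ge K v" "finite U" "card U < K" "t \<notin> U"
  shows "v t \<notin> span (v ` U)"
proof
  assume "v t \<in> span (v ` U)"
  then obtain u where "v t = (\<Sum>w\<in>v ` U. u w *\<^sub>R w)"
    using span_finite[of "v ` U"] assms(2) by auto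
  also have "\<dots> = (\<Sum>r\<in>U. u (v r) *\<^sub>R v r)"
    using kruskal_rank_ge_inj_on[OF assms(1,2)] assms(3) by (simp add: sum.reindex)
  finally have vt: "v t = (\<Sum>r\<in>U. u (v r) *\<^sub>R v r)" .
  define c where "c r = (if r = t then -1 else u (v r))" for r
  have "(\<Sum>r\<in>insert t U. c r *\<^sub>R v r) = - v t + (\<Sum>r\<in>U. c r *\<^sub>R v r)"
    using assms(2,4) by (simp add: c_def)
  also have "(\<Sum>r\<in>U. c r *\<^sub>R v r) = v t"
    unfolding vt using assms(4) by (intro sum.cong) (auto simp: c_def)
  finally have "c t = 0"
    using kruskal_rank_geD[OF assms(1), of "insert t U" c t] assms(2-4) by simp
  then show False by (simp add: c_def)
qed

lemma kruskal_rank_ge_dim_image: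
  fixes v :: "'r \<Rightarrow> 'a::euclidean_space"
  assumes "kruskal_rank_ge K v" "finite U" "card U \<le> K"
  shows "dim (v ` U) = card U"
  using assms(2,3)
proof (induction U rule: finite_induct)
  case (insert t U)
  then have "v t \<notin> span (v ` U)"
    using kruskal_rank_ge_not_in_span[OF assms(1)] by simp
  then show ?case using insert by (simp add: dim_insert)
qed simp

lemma kruskal_rank_ge_dual:
  fixes v :: "'r \<Rightarrow> 'a::euclidean_space"
  assumes "kruskal_rank_ge K v" "finite U" "card U \<le> K" "s1 \<in> U"
  shows "\<exists>\<psi>. \<forall>s\<in>U. v s \<bullet> \<psi> = (if s = s1 then 1 else 0)"
proof -
  define W where "W = v ` (U - {s1})"
  have "v s1 \<notin> span W"
    unfolding W_def using assms card_Diff1_less[of U s1]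
    by (intro kruskal_rank_ge_not_in_span[OF assms(1)]) auto
  moreover obtain y z where yz: "y \<in> span W" "\<And>w. w \<in> span W \<Longrightarrow> orthogonal z w" "v s1 = y + z"
    using orthogonal_subspace_decomp_exists[of W "v s1"] by blast
  ultimately have "z \<noteq> 0" by auto
  have "y \<bullet> z = 0" using yz(2)[OF yz(1)] by (simp add: orthogonal_def inner_commute)
  moreover have "v s \<bullet> z = 0" if "s \<in> U" "s \<noteq> s1" for s
    using yz(2)[of "v s"] that by (auto simp: W_def orthogonal_def inner_commute intro: span_base)
  ultimately show ?thesis
    using yz(3) \<open>z \<noteq> 0\<close> by (intro exI[of _ "z /\<^sub>R (z \<bullet> z)"]) (auto simp: inner_add_left)
qed

lemma kruskal_rank_ge_linear_image:
  assumes "kruskal_rank_ge K f" "linear E" "inj_on E (span X)" "range f \<subseteq> X"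
  shows "kruskal_rank_ge K (\<lambda>r. E (f r))"
  unfolding kruskal_rank_ge_def
proof (intro allI impI)
  fix S c assume S: "finite S" "card S \<le> K" and z: "(\<Sum>r\<in>S. c r *\<^sub>R E (f r)) = 0"
  have "E (\<Sum>r\<in>S. c r *\<^sub>R f r) = E 0"
    using z by (simp add: linear_sum[OF assms(2)] linear_cmul[OF assms(2)] linear_0[OF assms(2)])
  moreover have "(\<Sum>r\<in>S. c r *\<^sub>R f r) \<in> span X"
    using assms(4) by (intro span_sum span_scale) (auto intro: span_base)
  ultimately have "(\<Sum>r\<in>S. c r *\<^sub>R f r) = 0"
    using inj_onD[OF assms(3)] span_zero by blast
  then show "\<forall>r\<in>S. c r = 0" using kruskal_rank_geD[OF assms(1) S] by blast
qed

definition coord_subspace :: "'r set \<Rightarrow> (real^'r) set" where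
  "coord_subspace S = {u. \<forall>r. r \<notin> S \<longrightarrow> u $ r = 0}"

lemma subspace_coord_subspace: "subspace (coord_subspace S)"
  unfolding subspace_def coord_subspace_def by auto

lemma dim_coord_subspace: "dim (coord_subspace (S::'r::finite set)) = card S"
  using dim_substandard_cart[where 'a=real, of S] by (simp add: coord_subspace_def dim_vec_eq)

lemma dim_le_dim_image_plus_kernel:
  fixes L :: "'a::euclidean_space \<Rightarrow> 'b::euclidean_space"
  assumes "linear L" "subspace Y"
  shows "dim Y \<le> dim (L ` Y) + dim (Y \<inter> {u. L u = 0})"
proof -
  define K where "K = Y \<inter> {u. L u = 0}"
  define Y' where "Y' = {y \<in> Y. \<forall>x\<in>K. orthogonal x y}"
  have subK: "subspace K"
    unfolding K_def by (intro subspace_inter assms(2) linear_subspace_kernel assms(1))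
  have dY': "dim Y' + dim K = dim Y"
    unfolding Y'_def by (rule dim_subspace_orthogonal_to_vectors[OF subK assms(2)]) (auto simp: K_def)
  have subY': "subspace Y'"
    unfolding Y'_def using assms(2) by (auto simp: subspace_def orthogonal_clauses)
  have "inj_on L (span Y')"
  proof (rule inj_onI)
    fix x y assume xy: "x \<in> span Y'" "y \<in> span Y'" "L x = L y"
    have sY: "span Y' = Y'" using subY' by (simp add: span_eq_iff)
    have d: "x - y \<in> Y'" using xy(1,2) subspace_diff[OF subY'] unfolding sY by blast
    then have "x - y \<in> K"
      using xy(3) linear_diff[OF assms(1)] by (auto simp: K_def Y'_def)
    then show "x = y" using d by (auto simp: Y'_def orthogonal_def)
  qed
  then have "dim Y' = dim (L ` Y')" by (rule dim_image_eq[OF assms(1), symmetric])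
  also have "\<dots> \<le> dim (L ` Y)" by (rule dim_subset) (auto simp: Y'_def)
  finally show ?thesis using dY' by (simp add: K_def)
qed

lemma card_le_dim_range_weighted_inner:
  fixes b :: "'r::finite \<Rightarrow> 'b::euclidean_space"
  assumes "kruskal_rank_ge K b" "S \<subseteq> {r. g r \<noteq> 0}" "card S \<le> K"
  shows "card S \<le> dim (range (\<lambda>v. \<chi> r. g r * (b r \<bullet> v)))"
proof -
  define \<rho> :: "'b \<Rightarrow> real^'r" where "\<rho> = (\<lambda>v. \<chi> r. g r * (b r \<bullet> v))"
  define Y where "Y = range \<rho>"
  define Yp where "Yp = {u \<in> UNIV. \<forall>y\<in>Y. orthogonal y u}"
  have "linear \<rho>"
    unfolding \<rho>_def by (rule linearI) (auto simp: vec_eq_iff inner_add_right algebra_simps)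
  then have subY: "subspace Y" unfolding Y_def by (rule linear_subspace_image[OF _ subspace_UNIV])
  have dYp: "dim Yp + dim Y = CARD('r)"
    using dim_subspace_orthogonal_to_vectors[OF subY subspace_UNIV] by (simp add: Yp_def)
  have subYp: "subspace Yp" unfolding Yp_def by (auto simp: subspace_def orthogonal_clauses)
  have "Yp \<inter> coord_subspace S = {0}"
  proof safe
    fix u assume u: "u \<in> Yp" "u \<in> coord_subspace S"
    let ?z = "\<Sum>r\<in>S. (u $ r * g r) *\<^sub>R b r"
    have "0 = \<rho> ?z \<bullet> u" using u(1) by (auto simp: Yp_def Y_def orthogonal_def)
    also have "\<dots> = (\<Sum>r\<in>UNIV. g r * (b r \<bullet> ?z) * u $ r)" by (simp add: \<rho>_def inner_vec_def)
    also have "\<dots> = (\<Sum>r\<in>S. g r * (b r \<bullet> ?z) * u $ r)"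
      using u(2) by (intro sum.mono_neutral_right) (auto simp: coord_subspace_def)
    also have "\<dots> = ?z \<bullet> ?z" by (simp add: inner_sum_left inner_commute algebra_simps)
    finally have z: "?z = 0" by simp
    show "u = 0"
    proof (rule vec_eq_iff[THEN iffD2], rule allI)
      fix r show "u $ r = 0 $ r"
        using kruskal_rank_geD[OF assms(1) _ assms(3) z, of r] assms(2) u(2)
        by (cases "r \<in> S") (auto simp: coord_subspace_def)
    qed
  qed (auto simp: Yp_def coord_subspace_def orthogonal_clauses)
  moreover have "dim {x + y |x y. x \<in> Yp \<and> y \<in> coord_subspace S} + dim (Yp \<inter> coord_subspace S)
      = dim Yp + dim (coord_subspace S)"
    by (rule dim_sums_Int[OF subYp subspace_coord_subspace])
  moreover have "dim {x + y |x y. x \<in> Yp \<and> y \<in> coord_subspace S} \<le> CARD('r)"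
    by (rule dim_subset_UNIV_cart)
  ultimately show ?thesis using dYp dim_coord_subspace[of S] by (simp add: Y_def \<rho>_def)
qed

lemma dim_kernel_coord_combination_le:
  fixes a :: "'r::finite \<Rightarrow> 'a::euclidean_space"
  assumes "kruskal_rank_ge K a" "subspace Y" "Y \<subseteq> coord_subspace S" "T \<subseteq> S" "card T \<le> K"
  shows "dim (Y \<inter> {u. (\<Sum>r\<in>UNIV. u $ r *\<^sub>R a r) = 0}) + card T \<le> card S"
proof -
  define Z where "Z = Y \<inter> {u. (\<Sum>r\<in>UNIV. u $ r *\<^sub>R a r) = 0}"
  have "linear (\<lambda>u::real^'r. \<Sum>r\<in>UNIV. u $ r *\<^sub>R a r)"
    by (rule linearI) (auto simp: scaleR_add_left sum.distrib scaleR_sum_right)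
  then have subZ: "subspace Z"
    unfolding Z_def by (intro subspace_inter assms(2) linear_subspace_kernel)
  have "Z \<inter> coord_subspace T = {0}"
  proof safe
    fix u assume u: "u \<in> Z" "u \<in> coord_subspace T"
    have "(\<Sum>r\<in>T. u $ r *\<^sub>R a r) = (\<Sum>r\<in>UNIV. u $ r *\<^sub>R a r)"
      using u(2) by (intro sum.mono_neutral_left) (auto simp: coord_subspace_def)
    then have z: "(\<Sum>r\<in>T. u $ r *\<^sub>R a r) = 0" using u(1) by (simp add: Z_def)
    show "u = 0"
    proof (rule vec_eq_iff[THEN iffD2], rule allI)
      fix r show "u $ r = 0 $ r"
        using kruskal_rank_geD[OF assms(1) _ assms(5) z, of r] u(2)
        by (cases "r \<in> T") (auto simp: coord_subspace_def)
    qed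
  qed (use assms(2) in \<open>auto simp: Z_def coord_subspace_def subspace_0\<close>)
  moreover have "dim {x + y |x y. x \<in> Z \<and> y \<in> coord_subspace T} + dim (Z \<inter> coord_subspace T)
      = dim Z + dim (coord_subspace T)"
    by (rule dim_sums_Int[OF subZ subspace_coord_subspace])
  moreover have "dim {x + y |x y. x \<in> Z \<and> y \<in> coord_subspace T} \<le> dim (coord_subspace S)"
    using assms(3,4) by (intro dim_subset) (auto simp: Z_def coord_subspace_def subset_iff)
  ultimately show ?thesis using dim_coord_subspace[of S] dim_coord_subspace[of T] by (simp add: Z_def)
qed

definition rank_one_sum :: "('r::finite \<Rightarrow> real) \<Rightarrow> ('r \<Rightarrow> 'a::real_vector) \<Rightarrow> ('r \<Rightarrow> 'b::real_inner)
    \<Rightarrow> 'b \<Rightarrow> 'a" where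
  "rank_one_sum g a b v = (\<Sum>r\<in>UNIV. (g r * (b r \<bullet> v)) *\<^sub>R a r)"

lemma dim_range_rank_one_sum_le:
  fixes a :: "'r::finite \<Rightarrow> 'a::euclidean_space" and b :: "'r \<Rightarrow> 'b::euclidean_space"
  shows "dim (range (rank_one_sum g a b)) \<le> card {r. g r \<noteq> 0}"
proof -
  let ?G = "{r. g r \<noteq> 0}"
  have "rank_one_sum g a b v = (\<Sum>r\<in>?G. (g r * (b r \<bullet> v)) *\<^sub>R a r)" for v
    unfolding rank_one_sum_def by (rule sum.mono_neutral_right) auto
  then have "rank_one_sum g a b v \<in> span (a ` ?G)" for v
    by (auto intro: span_sum span_scale span_base)
  then have "range (rank_one_sum g a b) \<subseteq> span (a ` ?G)" by auto
  then have "dim (range (rank_one_sum g a b)) \<le> dim (a ` ?G)"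
    using dim_subset dim_span by metis
  also have "\<dots> \<le> card ?G"
    using dim_le_card'[of "a ` ?G"] card_image_le[of ?G a] by simp
  finally show ?thesis .
qed

lemma dim_range_rank_one_sum_ge:
  fixes a :: "'r::finite \<Rightarrow> 'a::euclidean_space" and b :: "'r \<Rightarrow> 'b::euclidean_space"
  assumes KA: "kruskal_rank_ge KA a" and KB: "kruskal_rank_ge KB b"
  shows "min (card {r. g r \<noteq> 0}) KA + min (card {r. g r \<noteq> 0}) KB
           \<le> dim (range (rank_one_sum g a b)) + card {r. g r \<noteq> 0}"
proof -
  define S where "S = {r. g r \<noteq> 0}"
  define \<rho> :: "'b \<Rightarrow> real^'r" where "\<rho> = (\<lambda>v. \<chi> r. g r * (b r \<bullet> v))"
  define L :: "real^'r \<Rightarrow> 'a" where "L = (\<lambda>u. \<Sum>r\<in>UNIV. u $ r *\<^sub>R a r)"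
  define Y where "Y = range \<rho>"
  have "linear \<rho>"
    unfolding \<rho>_def by (rule linearI) (auto simp: vec_eq_iff inner_add_right algebra_simps)
  then have subY: "subspace Y" unfolding Y_def by (rule linear_subspace_image[OF _ subspace_UNIV])
  have linL: "linear L"
    unfolding L_def by (rule linearI) (auto simp: scaleR_add_left sum.distrib scaleR_sum_right)
  have "range (rank_one_sum g a b) = L ` Y"
    by (auto simp: Y_def L_def \<rho>_def rank_one_sum_def image_comp o_def)
  moreover obtain SA where SA: "SA \<subseteq> S" "card SA = min (card S) KA"
    using obtain_subset_with_card_n[of "min (card S) KA" S] by auto
  moreover obtain SB where SB: "SB \<subseteq> S" "card SB = min (card S) KB"
    using obtain_subset_with_card_n[of "min (card S) KB" S] by auto
  moreover have "card SB \<le> dim Y"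
    unfolding Y_def \<rho>_def using SB by (intro card_le_dim_range_weighted_inner[OF KB]) (auto simp: S_def)
  moreover have "dim (Y \<inter> {u. L u = 0}) + card SA \<le> card S"
    unfolding L_def using SA subY
    by (intro dim_kernel_coord_combination_le[OF KA]) (auto simp: Y_def \<rho>_def S_def coord_subspace_def)
  moreover have "dim Y \<le> dim (L ` Y) + dim (Y \<inter> {u. L u = 0})"
    by (rule dim_le_dim_image_plus_kernel[OF linL subY])
  ultimately show ?thesis by (simp add: S_def)
qed

section \<open>Kruskal's permutation lemma\<close>

lemma card_Collect_add_card_not:
  fixes P :: "'r::finite \<Rightarrow> bool"
  shows "card {r. P r} + card {r. \<not> P r} = CARD('r)"
proof -
  have "card ({r. P r} \<union> {r. \<not> P r}) = card {r. P r} + card {r. \<not> P r}"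
    by (rule card_Un_disjoint) auto
  moreover have "{r. P r} \<union> {r. \<not> P r} = UNIV" by auto
  ultimately show ?thesis by simp
qed

lemma card_zero_inner_le_if_tensor_eq:
  fixes a ab :: "'r::finite \<Rightarrow> 'a::euclidean_space" and b bb :: "'r \<Rightarrow> 'b::euclidean_space"
    and c cb :: "'r \<Rightarrow> 'c::euclidean_space"
  assumes TI: "\<And>u v w. (\<Sum>r\<in>UNIV. (a r \<bullet> u) * (b r \<bullet> v) * (c r \<bullet> w))
                     = (\<Sum>r\<in>UNIV. (ab r \<bullet> u) * (bb r \<bullet> v) * (cb r \<bullet> w))"
    and KA: "kruskal_rank_ge KA a" and KB: "kruskal_rank_ge KB b"
    and "KA \<le> CARD('r)" "KB \<le> CARD('r)" "2 * CARD('r) + 2 \<le> KA + KB + KC"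
    and "KC \<le> card {r. cb r \<bullet> x = 0} + 1"
  shows "card {r. cb r \<bullet> x = 0} \<le> card {r. c r \<bullet> x = 0}"
proof -
  have "rank_one_sum (\<lambda>r. c r \<bullet> x) a b = rank_one_sum (\<lambda>r. cb r \<bullet> x) ab bb"
  proof (rule ext, rule vector_eq_ldot[THEN iffD1], rule allI)
    fix v u
    show "u \<bullet> rank_one_sum (\<lambda>r. c r \<bullet> x) a b v = u \<bullet> rank_one_sum (\<lambda>r. cb r \<bullet> x) ab bb v"
      using TI[of u v x] by (simp add: rank_one_sum_def inner_sum_right inner_commute algebra_simps)
  qed
  then have "min (card {r. c r \<bullet> x \<noteq> 0}) KA + min (card {r. c r \<bullet> x \<noteq> 0}) KB
      \<le> card {r. cb r \<bullet> x \<noteq> 0} + card {r. c r \<bullet> x \<noteq> 0}"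
    using dim_range_rank_one_sum_ge[OF KA KB, of "\<lambda>r. c r \<bullet> x"]
      dim_range_rank_one_sum_le[of "\<lambda>r. cb r \<bullet> x" ab bb] by simp
  then show ?thesis
    using assms(4-7) card_Collect_add_card_not[of "\<lambda>r. c r \<bullet> x = 0"]
      card_Collect_add_card_not[of "\<lambda>r. cb r \<bullet> x = 0"]
    by (simp add: min_def split: if_splits)
qed

lemma span_insert_eq_codim1:
  fixes F G :: "'a::euclidean_space set"
  assumes "subspace F" "subspace G" "F \<subseteq> G" "dim G = dim F + 1" "v \<in> G" "v \<notin> F"
  shows "span (insert v F) = G"
proof (rule subspace_dim_equal)
  show "span (insert v F) \<subseteq> G" using assms by (simp add: span_minimal)
  have spF: "span F = F" using assms(1) by (simp add: span_eq_iff)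
  have "v \<notin> span F" unfolding spF by (rule assms(6))
  then show "dim G \<le> dim (span (insert v F))" using assms(4) by (simp add: dim_insert)
qed (simp_all add: assms(2))

lemma subspace_codim1_normal:
  fixes F V :: "'a::euclidean_space set"
  assumes "subspace F" "subspace V" "F \<subseteq> V" "dim V = dim F + 1"
  shows "\<exists>z. \<forall>v\<in>V. v \<bullet> z = 0 \<longleftrightarrow> v \<in> F"
proof -
  have spF: "span F = F" using assms(1) by (simp add: span_eq_iff)
  have "\<not> V \<subseteq> F" using dim_subset[of V F] assms(4) by auto
  then obtain s where s: "s \<in> V" "s \<notin> F" by blast
  obtain y z where yz: "y \<in> F" "\<And>w. w \<in> F \<Longrightarrow> orthogonal z w" "s = y + z"
    using orthogonal_subspace_decomp_exists[of F s] unfolding spF by blast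
  have zF: "z \<notin> F" using s(2) yz subspace_add[OF assms(1)] by force
  have "z = s - y" using yz(3) by simp
  then have "z \<in> V" using s(1) yz(1) assms(3) subspace_diff[OF assms(2)] by auto
  then have spV: "span (insert z F) = V" using span_insert_eq_codim1[OF assms _ zF] by blast
  have "v \<bullet> z = 0 \<longleftrightarrow> v \<in> F" if "v \<in> V" for v
  proof
    have "v \<in> span (insert z F)" using that spV by simp
    then obtain k where "v - k *\<^sub>R z \<in> span F" by (auto simp: span_insert)
    then have k: "v - k *\<^sub>R z \<in> F" using spF by simp
    have "(v - k *\<^sub>R z) \<bullet> z = 0" using yz(2)[OF k] by (simp add: orthogonal_def inner_commute)
    then have vz: "v \<bullet> z = k * (z \<bullet> z)" by (simp add: inner_diff_left)
    have "z \<bullet> z \<noteq> 0" using zF subspace_0[OF assms(1)] by auto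
    assume "v \<bullet> z = 0"
    then show "v \<in> F" using k vz \<open>z \<bullet> z \<noteq> 0\<close> by simp
  next
    assume "v \<in> F"
    then show "v \<bullet> z = 0" using yz(2)[of v] by (simp add: orthogonal_def inner_commute)
  qed
  then show ?thesis by blast
qed

lemma dim_image_le_card_in_span:
  fixes f :: "'r::finite \<Rightarrow> 'a::euclidean_space"
  shows "dim (f ` T) \<le> card {r. f r \<in> span (f ` T)}"
proof -
  have "dim (f ` T) \<le> card T"
    using dim_le_card'[of "f ` T"] card_image_le[of T f] by simp
  also have "\<dots> \<le> card {r. f r \<in> span (f ` T)}" by (rule card_mono) (auto intro: span_base)
  finally show ?thesis .
qed

lemma sum_card_preimage_pencil:
  fixes f :: "'r::finite \<Rightarrow> 'a"
  assumes "finite GG" "\<And>H. H \<in> GG \<Longrightarrow> F \<subseteq> H"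
    and "\<And>H1 H2. H1 \<in> GG \<Longrightarrow> H2 \<in> GG \<Longrightarrow> H1 \<noteq> H2 \<Longrightarrow> H1 \<inter> H2 \<subseteq> F"
  shows "(\<Sum>H\<in>GG. card {r. f r \<in> H}) = card GG * card {r. f r \<in> F} + card {r. f r \<in> \<Union>GG - F}"
proof -
  have "card {r. f r \<in> H} = card {r. f r \<in> F} + card {r. f r \<in> H - F}" if "H \<in> GG" for H
  proof -
    have "{r. f r \<in> H} = {r. f r \<in> F} \<union> {r. f r \<in> H - F}" using assms(2)[OF that] by auto
    then show ?thesis by (simp add: card_Un_disjoint disjoint_iff)
  qed
  then have "(\<Sum>H\<in>GG. card {r. f r \<in> H})
      = card GG * card {r. f r \<in> F} + (\<Sum>H\<in>GG. card {r. f r \<in> H - F})"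
    by (simp add: sum.distrib)
  also have "(\<Sum>H\<in>GG. card {r. f r \<in> H - F}) = card (\<Union>H\<in>GG. {r. f r \<in> H - F})"
  proof (rule card_UN_disjoint[symmetric])
    show "\<forall>H1\<in>GG. \<forall>H2\<in>GG. H1 \<noteq> H2 \<longrightarrow> {r. f r \<in> H1 - F} \<inter> {r. f r \<in> H2 - F} = {}"
      using assms(3) by blast
  qed (simp_all add: assms(1))
  also have "(\<Union>H\<in>GG. {r. f r \<in> H - F}) = {r. f r \<in> \<Union>GG - F}" by auto
  finally show ?thesis .
qed

lemma card_preimage_le_if_pencil_sums_le:
  fixes f g :: "'r::finite \<Rightarrow> 'a"
  assumes "finite GG" "2 \<le> card GG" "\<And>H. H \<in> GG \<Longrightarrow> F \<subseteq> H"
    and "\<And>H1 H2. H1 \<in> GG \<Longrightarrow> H2 \<in> GG \<Longrightarrow> H1 \<noteq> H2 \<Longrightarrow> H1 \<inter> H2 \<subseteq> F"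
    and "range f \<subseteq> \<Union>GG \<union> F"
    and "(\<Sum>H\<in>GG. card {s. f s \<in> H}) \<le> (\<Sum>H\<in>GG. card {s. g s \<in> H})"
  shows "card {s. f s \<in> F} \<le> card {s. g s \<in> F}"
proof -
  have "{s. f s \<in> \<Union>GG - F} = {s. f s \<notin> F}" using assms(5) by auto
  then have "card {s. f s \<in> \<Union>GG - F} + card {s. f s \<in> F} = CARD('r)"
    using card_Collect_add_card_not[of "\<lambda>s. f s \<in> F"] by simp
  moreover have "card {s. g s \<in> \<Union>GG - F} \<le> card {s. g s \<notin> F}" by (rule card_mono) auto
  then have "card {s. g s \<in> \<Union>GG - F} + card {s. g s \<in> F} \<le> CARD('r)"
    using card_Collect_add_card_not[of "\<lambda>s. g s \<in> F"] by simp
  moreover have split_m: "card GG * n = (card GG - 1) * n + n" for n using assms(2) by (cases "card GG") auto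
  ultimately have "(card GG - 1) * card {s. f s \<in> F} \<le> (card GG - 1) * card {s. g s \<in> F}"
    using assms(6) sum_card_preimage_pencil[OF assms(1,3,4), of f] sum_card_preimage_pencil[OF assms(1,3,4), of g]
      split_m[of "card {s. f s \<in> F}"] split_m[of "card {s. g s \<in> F}"] by linarith
  then show ?thesis using assms(2) by simp
qed

lemma two_le_card_extensions_codim2:
  fixes cb :: "'r::finite \<Rightarrow> 'a::euclidean_space"
  assumes codim: "dim (cb ` T) + 2 \<le> dim (range cb)"
  shows "2 \<le> card ((\<lambda>r. span (cb ` insert r T)) ` {r. cb r \<notin> span (cb ` T)})"
proof (rule ccontr)
  define G where "G r = span (cb ` insert r T)" for r
  define Ob where "Ob = {r. cb r \<notin> span (cb ` T)}"
  assume "\<not> 2 \<le> card (G ` Ob)"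
  then have "card (G ` Ob) \<le> Suc 0" by simp
  then have one: "\<forall>H1\<in>G ` Ob. \<forall>H2\<in>G ` Ob. H1 = H2"
    by (rule card_le_Suc0_iff_eq[THEN iffD1, rotated]) simp
  show False
  proof (cases "Ob = {}")
    case True
    then have "range cb \<subseteq> span (cb ` T)" by (auto simp: Ob_def)
    then show False using dim_subset[of "range cb" "span (cb ` T)"] codim by simp
  next
    case False
    then obtain r0 where r0: "r0 \<in> Ob" by blast
    have "cb s \<in> G r0" for s
    proof (cases "s \<in> Ob")
      case True
      have "G s \<in> G ` Ob" "G r0 \<in> G ` Ob" using True r0 by auto
      then have "G s = G r0" using one by blast
      moreover have "cb s \<in> G s" unfolding G_def by (rule span_base) simp
      ultimately show ?thesis by simp
    next
      case False
      moreover have "span (cb ` T) \<subseteq> G r0" unfolding G_def by (rule span_mono) auto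
      ultimately show ?thesis unfolding Ob_def by blast
    qed
    then have "range cb \<subseteq> G r0" by auto
    moreover have "dim (G r0) = dim (cb ` T) + 1" using r0 by (simp add: G_def Ob_def dim_insert)
    ultimately show False using dim_subset[of "range cb" "G r0"] codim by simp
  qed
qed

lemma card_in_span_codim2_le:
  fixes c cb :: "'r::finite \<Rightarrow> 'a::euclidean_space"
  assumes IH: "\<And>r. cb r \<notin> span (cb ` T) \<Longrightarrow>
      card {s. cb s \<in> span (cb ` insert r T)} \<le> card {s. c s \<in> span (cb ` insert r T)}"
    and codim: "dim (cb ` T) + 2 \<le> dim (range cb)"
  shows "card {s. cb s \<in> span (cb ` T)} \<le> card {s. c s \<in> span (cb ` T)}"
proof -
  define F where "F = span (cb ` T)"
  define G where "G r = span (cb ` insert r T)" for r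
  define Ob where "Ob = {r. cb r \<notin> F}"
  define GG where "GG = G ` Ob"
  have subF: "subspace F" by (simp add: F_def)
  have FG: "F \<subseteq> G r" for r unfolding F_def G_def by (rule span_mono) auto
  have dimG: "dim (G r) = dim F + 1" if "r \<in> Ob" for r
    using that by (simp add: G_def F_def Ob_def dim_insert)
  have flat: "span (insert v F) = G r" if "r \<in> Ob" "v \<in> G r" "v \<notin> F" for r v
    using span_insert_eq_codim1[OF subF _ FG dimG[OF that(1)] that(2,3)] by (simp add: G_def)
  have meet: "H1 \<inter> H2 \<subseteq> F" if H: "H1 \<in> GG" "H2 \<in> GG" "H1 \<noteq> H2" for H1 H2
  proof
    fix v assume v: "v \<in> H1 \<inter> H2"
    obtain r1 r2 where "r1 \<in> Ob" "H1 = G r1" "r2 \<in> Ob" "H2 = G r2" using H(1,2) by (auto simp: GG_def)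
    then show "v \<in> F" using flat[of r1 v] flat[of r2 v] v H(3) by auto
  qed
  have cover: "range cb \<subseteq> \<Union>GG \<union> F"
    by (auto simp: GG_def G_def Ob_def intro: span_base)
  have m2: "2 \<le> card GG"
    using two_le_card_extensions_codim2[OF codim] by (simp add: GG_def G_def[abs_def] Ob_def F_def)
  have "(\<Sum>H\<in>GG. card {s. cb s \<in> H}) \<le> (\<Sum>H\<in>GG. card {s. c s \<in> H})"
    by (rule sum_mono) (use IH in \<open>auto simp: GG_def G_def Ob_def F_def\<close>)
  then show ?thesis
    unfolding F_def[symmetric] using m2 FG meet cover
    by (intro card_preimage_le_if_pencil_sums_le[of GG F]) (auto simp: GG_def)
qed

lemma in_span_range_if_zero_counts_dominated:
  fixes c cb :: "'r::finite \<Rightarrow> 'a::euclidean_space"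
  assumes H: "\<And>x. K \<le> card {r. cb r \<bullet> x = 0} + 1 \<Longrightarrow> card {r. cb r \<bullet> x = 0} \<le> card {r. c r \<bullet> x = 0}"
    and "K \<le> CARD('r)"
  shows "c r \<in> span (range cb)"
proof (rule ccontr)
  assume nV: "c r \<notin> span (range cb)"
  obtain y z where yz: "y \<in> span (range cb)" "\<And>w. w \<in> span (range cb) \<Longrightarrow> orthogonal z w" "c r = y + z"
    using orthogonal_subspace_decomp_exists[of "range cb" "c r"] by blast
  have "z \<noteq> 0" using nV yz by auto
  have "cb s \<bullet> z = 0" for s
    using yz(2)[of "cb s"] span_base[of "cb s" "range cb"] by (simp add: orthogonal_def inner_commute)
  then have "{s. cb s \<bullet> z = 0} = UNIV" by simp
  then have "{s. c s \<bullet> z = 0} = UNIV"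
    using H[of z] assms(2) card_seteq[of UNIV "{s. c s \<bullet> z = 0}"] by simp
  then have "c r \<bullet> z = 0" by (auto simp: set_eq_iff)
  moreover have "y \<bullet> z = 0" using yz(2)[OF yz(1)] by (simp add: orthogonal_def inner_commute)
  ultimately have "z \<bullet> z = 0" using yz(3) by (simp add: inner_add_left)
  then show False using \<open>z \<noteq> 0\<close> by simp
qed

lemma card_in_span_codim1_le:
  fixes c cb :: "'r::finite \<Rightarrow> 'a::euclidean_space"
  assumes H: "\<And>x. K \<le> card {r. cb r \<bullet> x = 0} + 1 \<Longrightarrow> card {r. cb r \<bullet> x = 0} \<le> card {r. c r \<bullet> x = 0}"
    and cV: "\<And>r. c r \<in> span (range cb)" and "K \<le> dim (range cb)"
    and "dim (cb ` T) + 1 = dim (range cb)"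
  shows "card {s. cb s \<in> span (cb ` T)} \<le> card {s. c s \<in> span (cb ` T)}"
proof -
  have "span (cb ` T) \<subseteq> span (range cb)" by (rule span_mono) auto
  then obtain z where z: "\<forall>v\<in>span (range cb). v \<bullet> z = 0 \<longleftrightarrow> v \<in> span (cb ` T)"
    using subspace_codim1_normal[of "span (cb ` T)" "span (range cb)"] assms(4) by auto
  have "{s. cb s \<bullet> z = 0} = {s. cb s \<in> span (cb ` T)}" using z by (auto intro: span_base)
  moreover have "{s. c s \<bullet> z = 0} = {s. c s \<in> span (cb ` T)}" using z cV by auto
  moreover have "K \<le> card {s. cb s \<in> span (cb ` T)} + 1"
    using dim_image_le_card_in_span[of cb T] assms(3,4) by simp
  ultimately show ?thesis using H[of z] by simp
qed

lemma card_in_span_le: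
  fixes c cb :: "'r::finite \<Rightarrow> 'a::euclidean_space"
  assumes H: "\<And>x. K \<le> card {r. cb r \<bullet> x = 0} + 1 \<Longrightarrow> card {r. cb r \<bullet> x = 0} \<le> card {r. c r \<bullet> x = 0}"
    and cV: "\<And>r. c r \<in> span (range cb)" and "K \<le> dim (range cb)"
  shows "card {s. cb s \<in> span (cb ` T)} \<le> card {s. c s \<in> span (cb ` T)}"
proof (induction T rule: measure_induct_rule[where f = "\<lambda>T. dim (range cb) - dim (cb ` T)"])
  case (less T)
  have "dim (cb ` T) \<le> dim (range cb)" by (rule dim_subset) auto
  then consider "dim (cb ` T) = dim (range cb)" | "dim (cb ` T) + 1 = dim (range cb)"
    | "dim (cb ` T) + 2 \<le> dim (range cb)" by linarith
  then show ?case
  proof cases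
    case 1
    have "span (cb ` T) \<subseteq> span (range cb)" by (rule span_mono) auto
    then have "span (cb ` T) = span (range cb)"
      by (intro subspace_dim_equal) (simp_all add: 1)
    then have "{s. c s \<in> span (cb ` T)} = UNIV" using cV by auto
    then show ?thesis by (simp add: card_mono)
  next
    case 2
    show ?thesis using card_in_span_codim1_le[OF H cV assms(3) 2] .
  next
    case 3
    show ?thesis
    proof (rule card_in_span_codim2_le[OF _ 3])
      fix r assume "cb r \<notin> span (cb ` T)"
      then have "dim (cb ` insert r T) = dim (cb ` T) + 1" by (simp add: dim_insert)
      then show "card {s. cb s \<in> span (cb ` insert r T)} \<le> card {s. c s \<in> span (cb ` insert r T)}"
        using 3 by (intro less.IH) simp
    qed
  qed
qed

lemma kruskal_rank_ge_card_in_line: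
  fixes c :: "'r::finite \<Rightarrow> 'a::real_vector"
  assumes "kruskal_rank_ge K c" "2 \<le> K"
  shows "card {s. c s \<in> span {w}} \<le> 1"
proof -
  have "s1 = s2" if s: "c s1 \<in> span {w}" "c s2 \<in> span {w}" for s1 s2
  proof -
    obtain t1 t2 where t: "c s1 = t1 *\<^sub>R w" "c s2 = t2 *\<^sub>R w" using s by (auto simp: span_singleton)
    have "t1 \<noteq> 0" using t kruskal_rank_ge_nonzero[OF assms(1), of s1] assms(2) by auto
    moreover have "t2 *\<^sub>R c s1 + (- t1) *\<^sub>R c s2 = 0" using t by (simp add: algebra_simps)
    ultimately show ?thesis using kruskal_rank_ge_pair[OF assms, of s1 s2 t2 "- t1"] by auto
  qed
  then show ?thesis by (simp add: card_le_Suc0_iff_eq)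
qed

theorem kruskal_permutation_lemma:
  fixes c cb :: "'r::finite \<Rightarrow> 'a::euclidean_space"
  assumes kr: "kruskal_rank_ge K c" and K: "2 \<le> K" "K \<le> CARD('r)"
    and H: "\<And>x. K \<le> card {r. cb r \<bullet> x = 0} + 1 \<Longrightarrow> card {r. cb r \<bullet> x = 0} \<le> card {r. c r \<bullet> x = 0}"
  shows "\<exists>\<pi>. bij \<pi> \<and> (\<forall>r. \<exists>l. l \<noteq> 0 \<and> cb r = l *\<^sub>R c (\<pi> r))"
proof -
  have cV: "c r \<in> span (range cb)" for r by (rule in_span_range_if_zero_counts_dominated[OF H K(2)])
  obtain S :: "'r set" where S: "card S = K" using obtain_subset_with_card_n[of K UNIV] K(2) by auto
  have "K = dim (c ` S)" using kruskal_rank_ge_dim_image[OF kr] S by simp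
  also have "\<dots> \<le> dim (range cb)" using dim_subset[of "c ` S" "span (range cb)"] cV by auto
  finally have count: "card {s. cb s \<in> span (cb ` T)} \<le> card {s. c s \<in> span (cb ` T)}" for T
    using card_in_span_le[OF H cV] by blast
  have line: "card {s. cb s \<in> span {cb r}} \<le> 1 \<and> (\<exists>s. c s \<in> span {cb r})" for r
  proof -
    have "{s. cb s \<in> span {cb r}} \<noteq> {}" by (auto intro: span_base)
    then have "card {s. cb s \<in> span {cb r}} \<noteq> 0" by (simp add: card_eq_0_iff)
    moreover have "card {s. cb s \<in> span {cb r}} \<le> card {s. c s \<in> span {cb r}}" using count[of "{r}"] by simp
    ultimately have "card {s. c s \<in> span {cb r}} \<noteq> 0" by linarith
    then show ?thesis
      using count[of "{r}"] kruskal_rank_ge_card_in_line[OF kr K(1), of "cb r"] by (auto simp: card_eq_0_iff)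
  qed
  define \<pi> where "\<pi> r = (SOME s. c s \<in> span {cb r})" for r
  have "\<exists>t. c (\<pi> r) = t *\<^sub>R cb r" for r
    using someI_ex[OF conjunct2[OF line[of r]]] by (auto simp: \<pi>_def span_singleton)
  then obtain t where t: "c (\<pi> r) = t r *\<^sub>R cb r" for r by metis
  have t_nz: "t r \<noteq> 0" for r using t[of r] kruskal_rank_ge_nonzero[OF kr, of "\<pi> r"] K(1) by auto
  have "inj \<pi>"
  proof (rule injI)
    fix r0 r1 assume "\<pi> r0 = \<pi> r1"
    then have "t r1 *\<^sub>R cb r1 = t r0 *\<^sub>R cb r0" using t[of r0] t[of r1] by simp
    then have "(1 / t r1) *\<^sub>R (t r1 *\<^sub>R cb r1) = (1 / t r1) *\<^sub>R (t r0 *\<^sub>R cb r0)" by simp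
    then have "cb r1 = (t r0 / t r1) *\<^sub>R cb r0" using t_nz[of r1] by simp
    then have "cb r1 \<in> span {cb r0}" by (simp add: span_scale span_base)
    moreover have "cb r0 \<in> span {cb r0}" by (simp add: span_base)
    ultimately have "{r0, r1} \<subseteq> {s. cb s \<in> span {cb r0}}" by simp
    then have "card {r0, r1} \<le> card {s. cb s \<in> span {cb r0}}" by (rule card_mono[rotated]) simp
    then have "card {r0, r1} \<le> 1" using line[of r0] by linarith
    then show "r0 = r1" by (cases "r0 = r1") auto
  qed
  then have "bij \<pi>" by (simp add: bij_def finite_UNIV_inj_surj)
  moreover have "cb r = (1 / t r) *\<^sub>R c (\<pi> r)" for r using t[of r] t_nz[of r] by simp
  ultimately show ?thesis using t_nz by (metis divide_eq_0_iff one_neq_zero)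
qed

section \<open>Uniqueness of trilinear decompositions\<close>

lemma sum_UNIV_eq_single:
  fixes f :: "'r::finite \<Rightarrow> 'b::comm_monoid_add"
  assumes "\<And>r. r \<noteq> s \<Longrightarrow> f r = 0"
  shows "(\<Sum>r\<in>UNIV. f r) = f s"
  using assms by (subst sum.mono_neutral_right[of UNIV "{s}"]) auto

lemma kruskal_rank_ge_sparse_test_vector:
  fixes c :: "'r::finite \<Rightarrow> 'c::euclidean_space"
  assumes kr: "kruskal_rank_ge K c" and "2 \<le> K" "K \<le> CARD('r)" and "s0 \<noteq> s1"
  shows "\<exists>x. c s0 \<bullet> x = 1 \<and> c s1 \<bullet> x = 0 \<and> card {s. c s \<bullet> x \<noteq> 0} + K \<le> CARD('r) + 1"
proof -
  have "K - 2 \<le> card (UNIV - {s0, s1})" using assms(2-4) by (simp add: card_Diff_subset)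
  then obtain S' where S': "S' \<subseteq> UNIV - {s0, s1}" "card S' = K - 2"
    by (rule obtain_subset_with_card_n)
  define S where "S = insert s1 S'"
  have s0S: "s0 \<notin> S" using S'(1) assms(4) by (auto simp: S_def)
  have cS: "card S = K - 1" using S' assms(2) by (auto simp: S_def card_insert_if)
  obtain x where x: "\<forall>s\<in>insert s0 S. c s \<bullet> x = (if s = s0 then 1 else 0)"
    using kruskal_rank_ge_dual[OF kr, of "insert s0 S" s0] cS s0S assms(2) by auto
  have "{s. c s \<bullet> x \<noteq> 0} \<subseteq> UNIV - S" using x s0S by (auto split: if_splits)
  then have "card {s. c s \<bullet> x \<noteq> 0} \<le> CARD('r) - card S"
    using card_mono[of "UNIV - S"] by (simp add: card_Diff_subset)
  moreover have "c s0 \<bullet> x = 1" "c s1 \<bullet> x = 0" using x assms(4) by (auto simp: S_def)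
  ultimately show ?thesis using cS assms(2,3) by (intro exI[of _ x]) auto
qed

text \<open>With \<open>U\<close> the support of \<open>\<lambda>s. c s \<bullet> x\<close>, the slice identity puts every \<open>a s\<close>, \<open>s \<in> U\<close>, into
  the span of the \<open>a (pA r)\<close> with \<open>pC r \<in> U\<close>; comparing dimensions via the Kruskal rank of \<open>a\<close>
  then forces \<open>pA r \<in> U\<close> whenever \<open>pC r \<in> U\<close>.\<close>
lemma slice_support_match:
  fixes a :: "'r::finite \<Rightarrow> 'a::euclidean_space" and b :: "'r \<Rightarrow> 'b::euclidean_space"
    and c :: "'r \<Rightarrow> 'c::euclidean_space" and pA pB pC :: "'r \<Rightarrow> 'r"
  assumes slice: "\<And>v. (\<Sum>r\<in>UNIV. ((c r \<bullet> x) * (b r \<bullet> v)) *\<^sub>R a r)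
      = (\<Sum>r\<in>UNIV. (\<mu> r * (c (pC r) \<bullet> x) * (b (pB r) \<bullet> v)) *\<^sub>R a (pA r))"
    and KA: "kruskal_rank_ge KA a" and KB: "kruskal_rank_ge KB b"
    and U: "card {s. c s \<bullet> x \<noteq> 0} \<le> KB" "card {s. c s \<bullet> x \<noteq> 0} < KA"
    and "bij pC" and "c (pC r) \<bullet> x \<noteq> 0"
  shows "c (pA r) \<bullet> x \<noteq> 0"
proof -
  define U where "U = {s. c s \<bullet> x \<noteq> 0}"
  define Q where "Q = pA ` {r. pC r \<in> U}"
  have "a s1 \<in> span (a ` Q)" if s1: "s1 \<in> U" for s1
  proof -
    obtain \<psi> where \<psi>: "\<forall>s\<in>U. b s \<bullet> \<psi> = (if s = s1 then 1 else 0)"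
      using kruskal_rank_ge_dual[OF KB _ _ s1] U(1) by (auto simp: U_def)
    have "(c s1 \<bullet> x) *\<^sub>R a s1 = (\<Sum>r\<in>UNIV. ((c r \<bullet> x) * (b r \<bullet> \<psi>)) *\<^sub>R a r)"
      using \<psi> s1 by (subst sum_UNIV_eq_single[of s1]) (auto simp: U_def)
    also have "\<dots> = (\<Sum>r\<in>{r. pC r \<in> U}. (\<mu> r * (c (pC r) \<bullet> x) * (b (pB r) \<bullet> \<psi>)) *\<^sub>R a (pA r))"
      unfolding slice by (rule sum.mono_neutral_right) (auto simp: U_def)
    also have "\<dots> \<in> span (a ` Q)" by (intro span_sum span_scale span_base) (auto simp: Q_def)
    finally have "(1 / (c s1 \<bullet> x)) *\<^sub>R ((c s1 \<bullet> x) *\<^sub>R a s1) \<in> span (a ` Q)" by (rule span_scale)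
    then show ?thesis using s1 by (simp add: U_def)
  qed
  then have sub: "span (a ` U) \<subseteq> span (a ` Q)" by (intro span_minimal) auto
  have "card Q \<le> card (pC -` U)" unfolding Q_def vimage_def by (rule card_image_le) simp
  also have "\<dots> = card U" using \<open>bij pC\<close> by (intro card_vimage_inj) (auto simp: bij_def)
  finally have "dim (a ` Q) \<le> dim (a ` U)"
    using dim_le_card'[of "a ` Q"] card_image_le[of Q a] kruskal_rank_ge_dim_image[OF KA, of U] U(2)
    by (simp add: U_def)
  then have "span (a ` U) = span (a ` Q)" by (intro subspace_dim_equal[OF _ _ sub]) simp_all
  moreover have "pA r \<in> Q" using assms(7) by (auto simp: Q_def U_def)
  ultimately have "a (pA r) \<in> span (a ` U)" by (auto intro: span_base)
  then have "pA r \<in> U" using kruskal_rank_ge_not_in_span[OF KA, of U] U(2) by (auto simp: U_def)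
  then show ?thesis by (simp add: U_def)
qed

lemma slice_eq_if_tensor_eq:
  fixes a :: "'r::finite \<Rightarrow> 'a::euclidean_space" and b :: "'r \<Rightarrow> 'b::euclidean_space"
    and c :: "'r \<Rightarrow> 'c::euclidean_space" and pA pB pC :: "'r \<Rightarrow> 'r"
  assumes "\<And>u v w. (\<Sum>r\<in>UNIV. (a r \<bullet> u) * (b r \<bullet> v) * (c r \<bullet> w))
      = (\<Sum>r\<in>UNIV. \<mu> r * (a (pA r) \<bullet> u) * (b (pB r) \<bullet> v) * (c (pC r) \<bullet> w))"
  shows "(\<Sum>r\<in>UNIV. ((c r \<bullet> x) * (b r \<bullet> v)) *\<^sub>R a r)
      = (\<Sum>r\<in>UNIV. (\<mu> r * (c (pC r) \<bullet> x) * (b (pB r) \<bullet> v)) *\<^sub>R a (pA r))"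
proof (rule vector_eq_ldot[THEN iffD1], rule allI)
  fix u
  show "u \<bullet> (\<Sum>r\<in>UNIV. ((c r \<bullet> x) * (b r \<bullet> v)) *\<^sub>R a r)
      = u \<bullet> (\<Sum>r\<in>UNIV. (\<mu> r * (c (pC r) \<bullet> x) * (b (pB r) \<bullet> v)) *\<^sub>R a (pA r))"
    using assms[of u v x] by (simp add: inner_sum_right inner_commute ac_simps)
qed

lemma kruskal_factor_match:
  fixes a :: "'r::finite \<Rightarrow> 'a::euclidean_space" and b :: "'r \<Rightarrow> 'b::euclidean_space"
    and c :: "'r \<Rightarrow> 'c::euclidean_space" and pA pB pC :: "'r \<Rightarrow> 'r"
  assumes TS: "\<And>u v w. (\<Sum>r\<in>UNIV. (a r \<bullet> u) * (b r \<bullet> v) * (c r \<bullet> w))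
      = (\<Sum>r\<in>UNIV. \<mu> r * (a (pA r) \<bullet> u) * (b (pB r) \<bullet> v) * (c (pC r) \<bullet> w))"
    and KA: "kruskal_rank_ge KA a" and KB: "kruskal_rank_ge KB b" and KC: "kruskal_rank_ge KC c"
    and "KA \<le> CARD('r)" "KB \<le> CARD('r)" "KC \<le> CARD('r)" "2 * CARD('r) + 2 \<le> KA + KB + KC"
    and "bij pC"
  shows "pA r = pC r"
proof (rule ccontr)
  assume "pA r \<noteq> pC r"
  then obtain x where x: "c (pC r) \<bullet> x = 1" "c (pA r) \<bullet> x = 0" "card {s. c s \<bullet> x \<noteq> 0} + KC \<le> CARD('r) + 1"
    using kruskal_rank_ge_sparse_test_vector[OF KC, of "pC r" "pA r"] assms(5-8) by auto
  have slice: "(\<Sum>r\<in>UNIV. ((c r \<bullet> x) * (b r \<bullet> v)) *\<^sub>R a r)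
      = (\<Sum>r\<in>UNIV. (\<mu> r * (c (pC r) \<bullet> x) * (b (pB r) \<bullet> v)) *\<^sub>R a (pA r))" for v
    by (rule slice_eq_if_tensor_eq[OF TS])
  have "c (pA r) \<bullet> x \<noteq> 0"
    by (rule slice_support_match[OF slice KA KB _ _ \<open>bij pC\<close>])
      (use x assms(5-8) in linarith)+
  then show False using x by simp
qed

lemma kruskal_scaling_eq_one:
  fixes a :: "'r::finite \<Rightarrow> 'a::euclidean_space" and b :: "'r \<Rightarrow> 'b::euclidean_space"
    and c :: "'r \<Rightarrow> 'c::euclidean_space" and \<pi> :: "'r \<Rightarrow> 'r"
  assumes TS: "\<And>u v w. (\<Sum>r\<in>UNIV. (a r \<bullet> u) * (b r \<bullet> v) * (c r \<bullet> w))
      = (\<Sum>r\<in>UNIV. \<mu> r * (a (\<pi> r) \<bullet> u) * (b (\<pi> r) \<bullet> v) * (c (\<pi> r) \<bullet> w))"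
    and KA: "kruskal_rank_ge KA a" and KB: "kruskal_rank_ge KB b" and KC: "kruskal_rank_ge KC c"
    and "KA \<le> CARD('r)" "KB \<le> CARD('r)" "KC \<le> CARD('r)" "2 * CARD('r) + 2 \<le> KA + KB + KC"
    and "bij \<pi>"
  shows "\<mu> r0 = 1"
proof -
  define s0 where "s0 = \<pi> r0"
  have "2 \<le> CARD('r)" using assms(5-8) by linarith
  then have "card (UNIV - {s0}) \<noteq> 0" by (simp add: card_Diff_subset)
  then have "UNIV - {s0} \<noteq> {}" by (intro notI) simp
  then obtain s1 where "s1 \<noteq> s0" by blast
  then obtain x where x: "c s0 \<bullet> x = 1" "card {s. c s \<bullet> x \<noteq> 0} + KC \<le> CARD('r) + 1"
    using kruskal_rank_ge_sparse_test_vector[OF KC, of s0 s1] assms(5-8) by auto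
  define U where "U = {s. c s \<bullet> x \<noteq> 0}"
  have s0U: "s0 \<in> U" using x by (simp add: U_def)
  obtain \<phi> where \<phi>: "\<forall>s\<in>U. a s \<bullet> \<phi> = (if s = s0 then 1 else 0)"
    using kruskal_rank_ge_dual[OF KA _ _ s0U] x assms(5-8) by (fastforce simp: U_def)
  obtain \<psi> where \<psi>: "\<forall>s\<in>U. b s \<bullet> \<psi> = (if s = s0 then 1 else 0)"
    using kruskal_rank_ge_dual[OF KB _ _ s0U] x assms(5-8) by (fastforce simp: U_def)
  have delta: "(a s \<bullet> \<phi>) * (b s \<bullet> \<psi>) * (c s \<bullet> x) = (if s = s0 then 1 else 0)" for s
    using \<phi> \<psi> x s0U by (cases "s \<in> U") (auto simp: U_def)
  have "1 = (\<Sum>r\<in>UNIV. (a r \<bullet> \<phi>) * (b r \<bullet> \<psi>) * (c r \<bullet> x))"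
    using delta by (subst sum_UNIV_eq_single[of s0]) auto
  also have "\<dots> = (\<Sum>r\<in>UNIV. \<mu> r * ((a (\<pi> r) \<bullet> \<phi>) * (b (\<pi> r) \<bullet> \<psi>) * (c (\<pi> r) \<bullet> x)))"
    unfolding TS by (simp add: mult.assoc)
  also have "\<dots> = \<mu> r0"
    using delta \<open>bij \<pi>\<close> by (subst sum_UNIV_eq_single[of r0]) (auto simp: s0_def bij_def inj_def)
  finally show ?thesis by simp
qed

lemma kruskal_third_factor_permutation:
  fixes a ab :: "'r::finite \<Rightarrow> 'a::euclidean_space" and b bb :: "'r \<Rightarrow> 'b::euclidean_space"
    and c cb :: "'r \<Rightarrow> 'c::euclidean_space"
  assumes TI: "\<And>u v w. (\<Sum>r\<in>UNIV. (a r \<bullet> u) * (b r \<bullet> v) * (c r \<bullet> w))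
      = (\<Sum>r\<in>UNIV. (ab r \<bullet> u) * (bb r \<bullet> v) * (cb r \<bullet> w))"
    and KA: "kruskal_rank_ge KA a" and KB: "kruskal_rank_ge KB b" and KC: "kruskal_rank_ge KC c"
    and le: "KA \<le> CARD('r)" "KB \<le> CARD('r)" "KC \<le> CARD('r)" and sum: "2 * CARD('r) + 2 \<le> KA + KB + KC"
  shows "\<exists>\<pi> \<gamma>. bij \<pi> \<and> (\<forall>r. cb r = \<gamma> r *\<^sub>R c (\<pi> r))"
proof -
  have "2 \<le> KC" using le sum by linarith
  then obtain \<pi> where "bij \<pi>" "\<forall>r. \<exists>l. l \<noteq> 0 \<and> cb r = l *\<^sub>R c (\<pi> r)"
    using kruskal_permutation_lemma[OF KC _ le(3) card_zero_inner_le_if_tensor_eq[OF TI KA KB le(1,2) sum]]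
    by blast
  then show ?thesis by metis
qed

theorem kruskal_uniqueness:
  fixes a ab :: "'r::finite \<Rightarrow> 'a::euclidean_space" and b bb :: "'r \<Rightarrow> 'b::euclidean_space"
    and c cb :: "'r \<Rightarrow> 'c::euclidean_space"
  assumes TI: "\<And>u v w. (\<Sum>r\<in>UNIV. (a r \<bullet> u) * (b r \<bullet> v) * (c r \<bullet> w))
      = (\<Sum>r\<in>UNIV. (ab r \<bullet> u) * (bb r \<bullet> v) * (cb r \<bullet> w))"
    and KA: "kruskal_rank_ge KA a" and KB: "kruskal_rank_ge KB b" and KC: "kruskal_rank_ge KC c"
    and le: "KA \<le> CARD('r)" "KB \<le> CARD('r)" "KC \<le> CARD('r)" and sum: "2 * CARD('r) + 2 \<le> KA + KB + KC"
  shows "\<exists>\<pi>. bij \<pi> \<and> (\<forall>r. \<exists>\<alpha> \<beta> \<gamma>. ab r = \<alpha> *\<^sub>R a (\<pi> r) \<and> bb r = \<beta> *\<^sub>R b (\<pi> r)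
                             \<and> cb r = \<gamma> *\<^sub>R c (\<pi> r) \<and> \<alpha> * \<beta> * \<gamma> = 1)"
proof -
  obtain pC \<gamma> where pC: "bij pC" and \<gamma>: "\<And>r. cb r = \<gamma> r *\<^sub>R c (pC r)"
    using kruskal_third_factor_permutation[OF TI KA KB KC le sum] by blast
  obtain pA \<alpha> where \<alpha>: "\<And>r. ab r = \<alpha> r *\<^sub>R a (pA r)"
    using kruskal_third_factor_permutation[OF _ KB KC KA le(2,3,1), of bb cb ab] TI sum
    by (fastforce simp: ac_simps)
  obtain pB \<beta> where \<beta>: "\<And>r. bb r = \<beta> r *\<^sub>R b (pB r)"
    using kruskal_third_factor_permutation[OF _ KC KA KB le(3,1,2), of cb ab bb] TI sum
    by (fastforce simp: ac_simps)
  define \<mu> where "\<mu> r = \<alpha> r * \<beta> r * \<gamma> r" for r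
  have TS: "(\<Sum>r\<in>UNIV. (a r \<bullet> u) * (b r \<bullet> v) * (c r \<bullet> w))
      = (\<Sum>r\<in>UNIV. \<mu> r * (a (pA r) \<bullet> u) * (b (pB r) \<bullet> v) * (c (pC r) \<bullet> w))" for u v w
    unfolding TI by (simp add: \<alpha> \<beta> \<gamma> \<mu>_def ac_simps)
  have AC: "pA r = pC r" for r
    by (rule kruskal_factor_match[OF TS KA KB KC le sum pC])
  have BC: "pB r = pC r" for r
    by (rule kruskal_factor_match[OF _ KB KA KC le(2,1,3) _ pC]) (use TS sum in \<open>simp_all add: ac_simps\<close>)
  have \<mu>1: "\<mu> r = 1" for r
    by (rule kruskal_scaling_eq_one[OF _ KA KB KC le sum pC]) (use TS AC BC in simp)
  show ?thesis
  proof (intro exI[of _ pC] conjI allI)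
    fix r
    show "\<exists>\<alpha> \<beta> \<gamma>. ab r = \<alpha> *\<^sub>R a (pC r) \<and> bb r = \<beta> *\<^sub>R b (pC r) \<and> cb r = \<gamma> *\<^sub>R c (pC r)
        \<and> \<alpha> * \<beta> * \<gamma> = 1"
      using \<alpha>[of r] \<beta>[of r] \<gamma>[of r] AC[of r] BC[of r] \<mu>1[of r] by (auto simp: \<mu>_def)
  qed (rule pC)
qed

instantiation "fun" :: (type, real_vector) real_vector
begin
definition scaleR_fun :: "real \<Rightarrow> ('a \<Rightarrow> 'b) \<Rightarrow> 'a \<Rightarrow> 'b" where
  "scaleR_fun c f = (\<lambda>x. c *\<^sub>R f x)"
instance
  by standard (auto simp: scaleR_fun_def fun_eq_iff scaleR_add_right scaleR_add_left)
end

lemma scaleR_fun_apply [simp]: "(c *\<^sub>R f) x = c *\<^sub>R f x"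
  by (simp add: scaleR_fun_def)

lemma sum_fun_apply [simp]: "(\<Sum>j\<in>S. f j) x = (\<Sum>j\<in>S. f j x)"
  by (induction S rule: infinite_finite_induct) auto

lemma exists_linear_inj_on_span:
  fixes X :: "'v::real_vector set"
  assumes "finite X" "card X \<le> CARD('n::finite)"
  shows "\<exists>E :: 'v \<Rightarrow> real^'n. linear E \<and> inj_on E (span X)"
proof -
  obtain B where B: "B \<subseteq> X" "independent B" "X \<subseteq> span B"
    by (rule maximal_independent_subset)
  have "card B \<le> CARD('n)" using card_mono[OF assms(1) B(1)] assms(2) by simp
  then obtain \<iota> :: "'v \<Rightarrow> 'n" where \<iota>: "inj_on \<iota> B"
    using card_le_inj[of B "UNIV :: 'n set"] finite_subset[OF B(1) assms(1)] by auto
  obtain E where E: "linear E" "\<And>x. x \<in> B \<Longrightarrow> E x = axis (\<iota> x) (1::real)"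
    using linear_independent_extend[OF B(2), of "\<lambda>x. axis (\<iota> x) (1::real)"] by blast
  have "inj_on E B" using \<iota> by (auto simp: inj_on_def E(2) axis_eq_axis)
  moreover have "independent (E ` B)"
    using E(2) by (intro independent_mono[OF independent_Basis]) (auto simp: Basis_vec_def)
  ultimately have "inj_on E (span B)" using linear_inj_on_span_independent_image[OF E(1)] by blast
  moreover have "span X \<subseteq> span B" using B(3) by (simp add: span_minimal)
  ultimately show ?thesis using E(1) inj_on_subset by blast
qed

lemma card_range_Un_range_le: "card (range f \<union> range g) \<le> CARD('r + 'r)"
  for f g :: "'r::finite \<Rightarrow> 'a"
proof -
  have "card (range f \<union> range g) \<le> card (range f) + card (range g)" by (rule card_Un_le)
  also have "\<dots> \<le> CARD('r) + CARD('r)" by (intro add_mono card_image_le) simp_all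
  finally show ?thesis by (simp add: card_sum)
qed

lemma linear_inj_on_span_scaleR_eq:
  assumes "linear E" "inj_on E (span X)" "x \<in> X" "y \<in> X" "E x = c *\<^sub>R E y"
  shows "x = c *\<^sub>R y"
  using assms by (intro inj_onD[OF assms(2)]) (auto simp: linear_cmul intro: span_base span_scale)

theorem kruskal_uniqueness_fun:
  fixes a ab :: "'r::finite \<Rightarrow> 'a::euclidean_space" and b bb :: "'r \<Rightarrow> 'y \<Rightarrow> real"
    and c cb :: "'r \<Rightarrow> 'z \<Rightarrow> real"
  assumes TI: "\<And>u y z. (\<Sum>r\<in>UNIV. (a r \<bullet> u) * b r y * c r z) = (\<Sum>r\<in>UNIV. (ab r \<bullet> u) * bb r y * cb r z)"
    and KA: "kruskal_rank_ge KA a" and KB: "kruskal_rank_ge KB b" and KC: "kruskal_rank_ge KC c"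
    and le: "KA \<le> CARD('r)" "KB \<le> CARD('r)" "KC \<le> CARD('r)" and sum: "2 * CARD('r) + 2 \<le> KA + KB + KC"
  shows "\<exists>\<pi>. bij \<pi> \<and> (\<forall>r. \<exists>\<alpha> \<beta> \<gamma>. ab r = \<alpha> *\<^sub>R a (\<pi> r) \<and> bb r = \<beta> *\<^sub>R b (\<pi> r)
                             \<and> cb r = \<gamma> *\<^sub>R c (\<pi> r) \<and> \<alpha> * \<beta> * \<gamma> = 1)"
proof -
  define Xb where "Xb = range b \<union> range bb"
  define Xc where "Xc = range c \<union> range cb"
  obtain Eb :: "('y \<Rightarrow> real) \<Rightarrow> real^('r + 'r)" where Eb: "linear Eb" "inj_on Eb (span Xb)"
    using exists_linear_inj_on_span[OF _ card_range_Un_range_le] by (auto simp: Xb_def)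
  obtain Ec :: "('z \<Rightarrow> real) \<Rightarrow> real^('r + 'r)" where Ec: "linear Ec" "inj_on Ec (span Xc)"
    using exists_linear_inj_on_span[OF _ card_range_Un_range_le] by (auto simp: Xc_def)
  have TIb: "(\<Sum>r\<in>UNIV. (a r \<bullet> u) * (Eb (b r) \<bullet> v) * c r z)
      = (\<Sum>r\<in>UNIV. (ab r \<bullet> u) * (Eb (bb r) \<bullet> v) * cb r z)" for u v z
  proof -
    have "(\<Sum>r\<in>UNIV. ((a r \<bullet> u) * c r z) *\<^sub>R b r) = (\<Sum>r\<in>UNIV. ((ab r \<bullet> u) * cb r z) *\<^sub>R bb r)"
      using TI[of u _ z] by (simp add: fun_eq_iff ac_simps)
    then have "Eb (\<Sum>r\<in>UNIV. ((a r \<bullet> u) * c r z) *\<^sub>R b r) \<bullet> v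
        = Eb (\<Sum>r\<in>UNIV. ((ab r \<bullet> u) * cb r z) *\<^sub>R bb r) \<bullet> v" by simp
    then show ?thesis by (simp add: linear_sum[OF Eb(1)] linear_cmul[OF Eb(1)] inner_sum_left ac_simps)
  qed
  have TIbc: "(\<Sum>r\<in>UNIV. (a r \<bullet> u) * (Eb (b r) \<bullet> v) * (Ec (c r) \<bullet> w))
      = (\<Sum>r\<in>UNIV. (ab r \<bullet> u) * (Eb (bb r) \<bullet> v) * (Ec (cb r) \<bullet> w))" for u v w
  proof -
    have "(\<Sum>r\<in>UNIV. ((a r \<bullet> u) * (Eb (b r) \<bullet> v)) *\<^sub>R c r)
        = (\<Sum>r\<in>UNIV. ((ab r \<bullet> u) * (Eb (bb r) \<bullet> v)) *\<^sub>R cb r)"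
      using TIb[of u v] by (simp add: fun_eq_iff ac_simps)
    then have "Ec (\<Sum>r\<in>UNIV. ((a r \<bullet> u) * (Eb (b r) \<bullet> v)) *\<^sub>R c r) \<bullet> w
        = Ec (\<Sum>r\<in>UNIV. ((ab r \<bullet> u) * (Eb (bb r) \<bullet> v)) *\<^sub>R cb r) \<bullet> w" by simp
    then show ?thesis by (simp add: linear_sum[OF Ec(1)] linear_cmul[OF Ec(1)] inner_sum_left ac_simps)
  qed
  have "kruskal_rank_ge KB (\<lambda>r. Eb (b r))"
    by (rule kruskal_rank_ge_linear_image[OF KB Eb]) (simp add: Xb_def)
  moreover have "kruskal_rank_ge KC (\<lambda>r. Ec (c r))"
    by (rule kruskal_rank_ge_linear_image[OF KC Ec]) (simp add: Xc_def)
  ultimately obtain \<pi> where "bij \<pi>" and fac: "\<forall>r. \<exists>\<alpha> \<beta> \<gamma>. ab r = \<alpha> *\<^sub>R a (\<pi> r)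
      \<and> Eb (bb r) = \<beta> *\<^sub>R Eb (b (\<pi> r)) \<and> Ec (cb r) = \<gamma> *\<^sub>R Ec (c (\<pi> r)) \<and> \<alpha> * \<beta> * \<gamma> = 1"
    using kruskal_uniqueness[OF TIbc KA _ _ le sum] by blast
  moreover have "bb r = \<beta> *\<^sub>R b s" if "Eb (bb r) = \<beta> *\<^sub>R Eb (b s)" for r s \<beta>
    using linear_inj_on_span_scaleR_eq[of Eb Xb "bb r" "b s" \<beta>] Eb that by (auto simp: Xb_def)
  moreover have "cb r = \<gamma> *\<^sub>R c s" if "Ec (cb r) = \<gamma> *\<^sub>R Ec (c s)" for r s \<gamma>
    using linear_inj_on_span_scaleR_eq[of Ec Xc "cb r" "c s" \<gamma>] Ec that by (auto simp: Xc_def)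
  ultimately show ?thesis by metis
qed

lemma power_sum_along_line:
  fixes w :: "'j::finite \<Rightarrow> 'a::real_inner"
  shows "(\<Sum>j\<in>UNIV. c j * (w j \<bullet> (y + s *\<^sub>R z))^r)
    = (\<Sum>i\<le>r. (of_nat (r choose i) * (\<Sum>j\<in>UNIV. c j * (w j \<bullet> z)^i * (w j \<bullet> y)^(r - i))) * s^i)"
proof -
  have "(w j \<bullet> (y + s *\<^sub>R z))^r = (\<Sum>i\<le>r. of_nat (r choose i) * (s * (w j \<bullet> z))^i * (w j \<bullet> y)^(r - i))"
    for j
    using binomial_ring[of "s * (w j \<bullet> z)" "w j \<bullet> y" r] by (simp add: inner_add_right add.commute)
  then have "(\<Sum>j\<in>UNIV. c j * (w j \<bullet> (y + s *\<^sub>R z))^r)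
      = (\<Sum>i\<le>r. \<Sum>j\<in>UNIV. c j * (of_nat (r choose i) * (s * (w j \<bullet> z))^i * (w j \<bullet> y)^(r - i)))"
    by (simp add: sum_distrib_left sum.swap[of _ UNIV])
  also have "\<dots> = (\<Sum>i\<le>r. (of_nat (r choose i) * (\<Sum>j\<in>UNIV. c j * (w j \<bullet> z)^i * (w j \<bullet> y)^(r - i))) * s^i)"
    by (simp add: sum_distrib_left sum_distrib_right power_mult_distrib mult_ac)
  finally show ?thesis .
qed

lemma power_sum_polarization:
  fixes w w' :: "'j::finite \<Rightarrow> 'a::real_inner"
  assumes "\<And>x. (\<Sum>j\<in>UNIV. c j * (w j \<bullet> x)^r) = (\<Sum>j\<in>UNIV. c' j * (w' j \<bullet> x)^r)" and "p + q = r"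
  shows "(\<Sum>j\<in>UNIV. c j * (w j \<bullet> y)^p * (w j \<bullet> z)^q) = (\<Sum>j\<in>UNIV. c' j * (w' j \<bullet> y)^p * (w' j \<bullet> z)^q)"
proof -
  define C where "C c w i = of_nat (r choose i) * (\<Sum>j\<in>UNIV. c j * (w j \<bullet> z)^i * (w j \<bullet> y)^(r - i))"
    for c :: "'j \<Rightarrow> real" and w :: "'j \<Rightarrow> 'a" and i
  have "\<forall>s. (\<Sum>i\<le>r. C c w i * s^i) = (\<Sum>i\<le>r. C c' w' i * s^i)"
    using assms(1)[of "y + _ *\<^sub>R z"] by (simp add: C_def power_sum_along_line)
  then have "C c w q = C c' w' q" using polyfun_eq_coeffs[of "C c w" r "C c' w'"] assms(2) by auto
  moreover have "r - q = p" "q \<le> r" using assms(2) by simp_all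
  ultimately show ?thesis by (simp add: C_def ac_simps)
qed

section \<open>Zero sets of polynomials and generic independence\<close>

lemma continuous_on_real_polynomial_function:
  fixes f :: "'a::real_normed_vector \<Rightarrow> real"
  shows "real_polynomial_function f \<Longrightarrow> continuous_on S f"
  by (simp add: continuous_on_polymonial_function real_polynomial_function_eq)

lemma real_polynomial_function_isolated_root_on_ray:
  fixes f :: "'a::real_normed_vector \<Rightarrow> real"
  assumes "real_polynomial_function f" "f 0 \<noteq> 0"
  shows "\<exists>n::nat. \<forall>s. \<bar>s - 1\<bar> \<le> 1 / Suc n \<and> s \<noteq> 1 \<longrightarrow> f (s *\<^sub>R x) \<noteq> 0"
proof -
  have "real_polynomial_function (f \<circ> (\<lambda>t. t *\<^sub>R x))"
    using assms(1) by (intro real_polynomial_function_compose polynomial_function_bounded_linear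
        bounded_linear_scaleR_left)
  then obtain a N where "f \<circ> (\<lambda>t. t *\<^sub>R x) = (\<lambda>t. \<Sum>i\<le>N. a i * t^i)"
    using real_polynomial_function_imp_sum by blast
  then have a: "f (t *\<^sub>R x) = (\<Sum>i\<le>N. a i * t^i)" for t by (simp add: fun_eq_iff)
  have "a 0 \<noteq> 0" using a[of 0] assms(2) by (simp add: zero_power)
  then have "finite ({t. f (t *\<^sub>R x) = 0} - {1})" unfolding a by (auto intro: polyfun_roots_finite)
  then obtain d where d: "0 < d" "\<And>t. t \<in> {t. f (t *\<^sub>R x) = 0} - {1} \<Longrightarrow> d \<le> \<bar>t - 1\<bar>"
    using finite_set_avoid[of "{t. f (t *\<^sub>R x) = 0} - {1}" 1] by (auto simp: dist_real_def abs_minus_commute)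
  obtain n :: nat where n: "1 / Suc n < d" using reals_Archimedean[OF d(1)] by (auto simp: inverse_eq_divide)
  show ?thesis
  proof (intro exI[of _ n] allI impI notI)
    fix s assume s: "\<bar>s - 1\<bar> \<le> 1 / Suc n \<and> s \<noteq> 1" and "f (s *\<^sub>R x) = 0"
    then have "d \<le> \<bar>s - 1\<bar>" using d(2) by auto
    then show False using s n by linarith
  qed
qed

lemma borel_ray_avoiding_zeros:
  fixes f :: "'a::euclidean_space \<Rightarrow> real"
  assumes "continuous_on UNIV f"
  shows "{x. \<forall>s. \<bar>s - 1\<bar> \<le> \<delta> \<and> s \<noteq> 1 \<longrightarrow> f (s *\<^sub>R x) \<noteq> 0} \<in> sets borel"
proof -
  define T where "T = {p::real \<times> 'a. f (fst p *\<^sub>R snd p) = 0}"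
  define W where "W k = {s::real. 1 / Suc k \<le> \<bar>s - 1\<bar> \<and> \<bar>s - 1\<bar> \<le> \<delta>}" for k :: nat
  define C where "C k = {x. \<exists>s. s \<in> W k \<and> (s, x) \<in> T}" for k
  have "continuous_on UNIV (\<lambda>p::real \<times> 'a. f (fst p *\<^sub>R snd p))"
    by (rule continuous_on_compose2[OF assms]) (auto intro!: continuous_intros)
  then have "closed T" unfolding T_def using closed_Collect_eq[OF _ continuous_on_const] by blast
  moreover have "compact (W k)" for k
  proof (subst compact_eq_bounded_closed, intro conjI)
    show "bounded (W k)"
      unfolding bounded_iff W_def by (intro exI[of _ "\<bar>\<delta>\<bar> + 1"]) auto
    show "closed (W k)" unfolding W_def by (intro closed_Collect_conj closed_Collect_le continuous_intros)
  qed
  ultimately have "closed (C k)" for k unfolding C_def by (intro closed_compact_projection)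
  then have "- (\<Union>k. C k) \<in> sets borel" by (intro borel_comp sets.countable_UN borel_closed) auto
  moreover have "{x. \<forall>s. \<bar>s - 1\<bar> \<le> \<delta> \<and> s \<noteq> 1 \<longrightarrow> f (s *\<^sub>R x) \<noteq> 0} = - (\<Union>k. C k)"
  proof -
    have "(\<exists>k. 1 / real (Suc k) \<le> \<bar>s - 1\<bar>) \<longleftrightarrow> s \<noteq> 1" for s
    proof
      assume "s \<noteq> 1"
      then obtain k where "inverse (real (Suc k)) < \<bar>s - 1\<bar>" using reals_Archimedean[of "\<bar>s - 1\<bar>"] by auto
      then show "\<exists>k. 1 / real (Suc k) \<le> \<bar>s - 1\<bar>" by (auto simp: inverse_eq_divide intro!: exI[of _ k])
    qed auto
    then show ?thesis unfolding C_def T_def W_def by auto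
  qed
  ultimately show ?thesis by simp
qed

lemma null_sets_zeros_in_shell_isolated_on_rays:
  fixes f :: "'a::euclidean_space \<Rightarrow> real"
  assumes cont: "continuous_on UNIV f" and "0 \<le> \<delta>" "h \<le> \<delta> * \<eta>" "0 < \<eta>"
    and Z\<eta>: "\<And>x. f x = 0 \<Longrightarrow> \<eta> \<le> norm x"
  shows "{x. f x = 0} \<inter> {x. \<forall>s. \<bar>s - 1\<bar> \<le> \<delta> \<and> s \<noteq> 1 \<longrightarrow> f (s *\<^sub>R x) \<noteq> 0}
           \<inter> {x. a \<le> norm x \<and> norm x \<le> a + h} \<in> null_sets lebesgue"
    (is "?Z \<inter> ?K \<inter> ?Sh \<in> _")
proof (rule starlike_negligible_bounded_gmeasurable)
  have "closed ?Z" using closed_Collect_eq[OF cont continuous_on_const] by blast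
  moreover have "?K \<in> sets borel" by (rule borel_ray_avoiding_zeros[OF cont])
  moreover have "closed ?Sh" by (intro closed_Collect_conj closed_Collect_le continuous_intros)
  ultimately show "?Z \<inter> ?K \<inter> ?Sh \<in> sets lebesgue" by (intro sets_completionI_sets) auto
  show "bounded (?Z \<inter> ?K \<inter> ?Sh)" by (rule bounded_subset[OF bounded_cball[of 0 "a + h"]]) auto
  fix c x assume cx: "c *\<^sub>R x \<in> ?Z \<inter> ?K \<inter> ?Sh" "0 \<le> c" "x \<in> ?Z \<inter> ?K \<inter> ?Sh"
  have "\<bar>c - 1\<bar> * norm x = \<bar>(c - 1) * norm x\<bar>" by (simp add: abs_mult)
  also have "\<dots> = \<bar>norm (c *\<^sub>R x) - norm x\<bar>" using cx(2) by (simp add: left_diff_distrib)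
  also have "\<dots> \<le> \<delta> * \<eta>" using cx(1,3) assms(3) by auto
  also have "\<dots> \<le> \<delta> * norm x" using Z\<eta>[of x] cx(3) assms(2) by (intro mult_left_mono) auto
  finally have "\<bar>c - 1\<bar> * norm x \<le> \<delta> * norm x" .
  moreover have "0 < norm x" using Z\<eta>[of x] cx(3) assms(4) by force
  ultimately have "\<bar>c - 1\<bar> \<le> \<delta>" by simp
  then show "c = 1" using cx(1,3) by auto
qed

text \<open>The zero set is cut into countably many pieces, each meeting every ray from the origin at
  most once: a thin spherical shell, intersected with the points whose ray has no further zero at
  relative distance \<open>\<le> 1/(n+1)\<close>.\<close>
lemma null_sets_real_polynomial_zeros_if_nonzero_at_0:
  fixes f :: "'a::euclidean_space \<Rightarrow> real"
  assumes pf: "real_polynomial_function f" and f0: "f 0 \<noteq> 0"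
  shows "{x. f x = 0} \<in> null_sets lebesgue"
proof -
  have cont: "continuous_on UNIV f" by (rule continuous_on_real_polynomial_function[OF pf])
  then have "isCont f 0" by (simp add: continuous_on_eq_continuous_at)
  then obtain \<eta> where \<eta>: "\<eta> > 0" "\<And>y. dist 0 y < \<eta> \<Longrightarrow> f y \<noteq> 0"
    using continuous_at_avoid[of 0 f] f0 by blast
  have Z\<eta>: "\<eta> \<le> norm x" if "f x = 0" for x using \<eta>(2)[of x] that by force
  define \<delta> where "\<delta> n = 1 / real (Suc n)" for n :: nat
  define h where "h n = \<eta> * \<delta> n / 2" for n
  define P where "P n m = {x. f x = 0} \<inter> {x. \<forall>s. \<bar>s - 1\<bar> \<le> \<delta> n \<and> s \<noteq> 1 \<longrightarrow> f (s *\<^sub>R x) \<noteq> 0}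
      \<inter> {x. \<eta> + real m * h n \<le> norm x \<and> norm x \<le> (\<eta> + real m * h n) + h n}" for n m
  have hpos: "0 < h n" for n using \<eta>(1) by (simp add: h_def \<delta>_def)
  have "P n m \<in> null_sets lebesgue" for n m
    unfolding P_def using \<eta>(1) Z\<eta>
    by (intro null_sets_zeros_in_shell_isolated_on_rays[OF cont]) (auto simp: h_def \<delta>_def field_simps)
  then have "(\<Union>(n, m). P n m) \<in> null_sets lebesgue" by (auto intro: null_sets_UN)
  moreover have "{x. f x = 0} \<subseteq> (\<Union>(n, m). P n m)"
  proof
    fix x assume x: "x \<in> {x. f x = 0}"
    obtain n where n: "\<forall>s. \<bar>s - 1\<bar> \<le> \<delta> n \<and> s \<noteq> 1 \<longrightarrow> f (s *\<^sub>R x) \<noteq> 0"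
      using real_polynomial_function_isolated_root_on_ray[OF pf f0, of x] by (auto simp: \<delta>_def)
    define m where "m = nat \<lfloor>(norm x - \<eta>) / h n\<rfloor>"
    have "0 \<le> (norm x - \<eta>) / h n" using Z\<eta> x hpos[of n] by simp
    then have "real m \<le> (norm x - \<eta>) / h n" "(norm x - \<eta>) / h n < real m + 1"
      unfolding m_def by linarith+
    then have "x \<in> P n m" using x n hpos[of n] by (simp add: P_def field_simps)
    then show "x \<in> (\<Union>(n, m). P n m)" by blast
  qed
  ultimately show ?thesis using null_sets_completion_subset by blast
qed

lemma null_sets_real_polynomial_zeros:
  fixes f :: "'a::euclidean_space \<Rightarrow> real"
  assumes pf: "real_polynomial_function f" and "f a \<noteq> 0"
  shows "{x. f x = 0} \<in> null_sets lebesgue"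
proof -
  have "real_polynomial_function (f \<circ> (\<lambda>x. x + a))"
    using pf by (intro real_polynomial_function_compose polynomial_function_add) auto
  then have "{x. f (x + a) = 0} \<in> null_sets lebesgue"
    using null_sets_real_polynomial_zeros_if_nonzero_at_0[of "f \<circ> (\<lambda>x. x + a)"] assms(2) by simp
  then have "negligible ((+) a ` {x. f (x + a) = 0})"
    by (intro negligible_translation) (simp add: negligible_iff_null_sets)
  moreover have "(+) a ` {x. f (x + a) = 0} = {x. f x = 0}"
  proof safe
    fix x assume "f x = 0"
    then show "x \<in> (+) a ` {x. f (x + a) = 0}" by (intro image_eqI[of _ _ "x - a"]) auto
  qed (simp add: add.commute)
  ultimately show ?thesis by (simp add: negligible_iff_null_sets)
qed

lemma det_ne_0_iff_kernel_trivial: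
  fixes A :: "real^'n^'n"
  shows "det A \<noteq> 0 \<longleftrightarrow> (\<forall>x. A *v x = 0 \<longrightarrow> x = 0)"
  using det_nz_iff_inj[of "(*v) A"] by (simp add: matrix_vector_mul_linear linear_injective_0)

lemma real_polynomial_function_det:
  fixes G :: "'a::real_normed_vector \<Rightarrow> real^'n^'n"
  assumes "\<And>i k. real_polynomial_function (\<lambda>P. G P $ i $ k)"
  shows "real_polynomial_function (\<lambda>P. det (G P))"
  unfolding det_def using assms by (intro real_polynomial_function_sum real_polynomial_function.intros(4)
      real_polynomial_function_prod) (auto simp: finite_permutations)

definition padded_gram :: "'j set \<Rightarrow> 'y set \<Rightarrow> ('j \<Rightarrow> 'y \<Rightarrow> real) \<Rightarrow> real^'j^'j" where
  "padded_gram S Y v =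
     (\<chi> j l. if j \<in> S \<and> l \<in> S then (\<Sum>y\<in>Y. v j y * v l y) else if j = l then 1 else 0)"

lemma padded_gram_mult_eq_0_iff:
  fixes v :: "'j::finite \<Rightarrow> 'y \<Rightarrow> real"
  assumes "finite Y"
  shows "padded_gram S Y v *v u = 0 \<longleftrightarrow> (\<forall>j. j \<notin> S \<longrightarrow> u $ j = 0) \<and> (\<forall>y\<in>Y. (\<Sum>l\<in>S. u $ l * v l y) = 0)"
proof -
  have row: "(padded_gram S Y v *v u) $ j
      = (if j \<in> S then (\<Sum>y\<in>Y. v j y * (\<Sum>l\<in>S. u $ l * v l y)) else u $ j)" for j
  proof (cases "j \<in> S")
    case True
    have "(padded_gram S Y v *v u) $ j = (\<Sum>l\<in>S. (\<Sum>y\<in>Y. v j y * v l y) * u $ l)"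
      unfolding matrix_vector_mult_def using True
      by (simp, intro sum.mono_neutral_cong_right) (auto simp: padded_gram_def)
    also have "\<dots> = (\<Sum>l\<in>S. \<Sum>y\<in>Y. v j y * (u $ l * v l y))"
      by (simp add: sum_distrib_left sum_distrib_right mult_ac)
    also have "\<dots> = (\<Sum>y\<in>Y. v j y * (\<Sum>l\<in>S. u $ l * v l y))"
      by (subst sum.swap) (simp add: sum_distrib_left)
    finally show ?thesis using True by simp
  next
    case False
    then show ?thesis
      unfolding matrix_vector_mult_def by (simp, subst sum_UNIV_eq_single[of j]) (auto simp: padded_gram_def)
  qed
  have "(\<Sum>y\<in>Y. (\<Sum>l\<in>S. u $ l * v l y)^2) = (\<Sum>y\<in>Y. \<Sum>j\<in>S. u $ j * (v j y * (\<Sum>l\<in>S. u $ l * v l y)))"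
    by (simp add: power2_eq_square sum_distrib_right mult.assoc)
  also have "\<dots> = (\<Sum>j\<in>S. u $ j * (\<Sum>y\<in>Y. v j y * (\<Sum>l\<in>S. u $ l * v l y)))"
    by (subst sum.swap) (simp add: sum_distrib_left)
  finally have sq: "(\<Sum>y\<in>Y. (\<Sum>l\<in>S. u $ l * v l y)^2)
      = (\<Sum>j\<in>S. u $ j * (\<Sum>y\<in>Y. v j y * (\<Sum>l\<in>S. u $ l * v l y)))" .
  have "(\<forall>j\<in>S. (\<Sum>y\<in>Y. v j y * (\<Sum>l\<in>S. u $ l * v l y)) = 0) \<longleftrightarrow> (\<forall>y\<in>Y. (\<Sum>l\<in>S. u $ l * v l y) = 0)"
  proof
    assume "\<forall>j\<in>S. (\<Sum>y\<in>Y. v j y * (\<Sum>l\<in>S. u $ l * v l y)) = 0"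
    then have "(\<Sum>y\<in>Y. (\<Sum>l\<in>S. u $ l * v l y)^2) = 0" unfolding sq by simp
    then show "\<forall>y\<in>Y. (\<Sum>l\<in>S. u $ l * v l y) = 0"
      using sum_nonneg_eq_0_iff[OF assms, of "\<lambda>y. (\<Sum>l\<in>S. u $ l * v l y)^2"] by simp
  qed simp
  then show ?thesis unfolding vec_eq_iff row by (auto split: if_splits)
qed

lemma det_padded_gram_ne_0_iff:
  fixes v :: "'j::finite \<Rightarrow> 'y \<Rightarrow> real"
  assumes "finite Y"
  shows "det (padded_gram S Y v) \<noteq> 0 \<longleftrightarrow> (\<forall>c. (\<forall>y\<in>Y. (\<Sum>j\<in>S. c j * v j y) = 0) \<longrightarrow> (\<forall>j\<in>S. c j = 0))"
proof -
  have "(\<forall>u. (\<forall>j. j \<notin> S \<longrightarrow> u $ j = 0) \<and> (\<forall>y\<in>Y. (\<Sum>l\<in>S. u $ l * v l y) = 0) \<longrightarrow> u = 0)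
      \<longleftrightarrow> (\<forall>c. (\<forall>y\<in>Y. (\<Sum>j\<in>S. c j * v j y) = 0) \<longrightarrow> (\<forall>j\<in>S. c j = 0))"
  proof safe
    fix c j assume u: "\<forall>u. (\<forall>j. j \<notin> S \<longrightarrow> u $ j = 0) \<and> (\<forall>y\<in>Y. (\<Sum>l\<in>S. u $ l * v l y) = 0) \<longrightarrow> u = 0"
      and c: "\<forall>y\<in>Y. (\<Sum>j\<in>S. c j * v j y) = 0" and "j \<in> S"
    then show "c j = 0"
      using u[rule_format, of "\<chi> l. if l \<in> S then c l else 0"] by (auto simp: vec_eq_iff dest: spec[of _ j])
  qed (auto simp: vec_eq_iff)
  then show ?thesis unfolding det_ne_0_iff_kernel_trivial padded_gram_mult_eq_0_iff[OF assms] .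
qed

lemma null_sets_dependent_on_samples:
  fixes v :: "'P::euclidean_space \<Rightarrow> 'j::finite \<Rightarrow> 'y \<Rightarrow> real"
  assumes pf: "\<And>j y. real_polynomial_function (\<lambda>P. v P j y)" and "finite Y"
    and witness: "\<And>c. \<forall>y\<in>Y. (\<Sum>j\<in>S. c j * v P0 j y) = 0 \<Longrightarrow> \<forall>j\<in>S. c j = 0"
  shows "{P. \<not> (\<forall>c. (\<forall>y\<in>Y. (\<Sum>j\<in>S. c j * v P j y) = 0) \<longrightarrow> (\<forall>j\<in>S. c j = 0))} \<in> null_sets lebesgue"
proof -
  have "real_polynomial_function (\<lambda>P. padded_gram S Y (v P) $ i $ k)" for i k
    using pf \<open>finite Y\<close> by (cases "i \<in> S \<and> k \<in> S")
      (auto simp: padded_gram_def intro!: real_polynomial_function_sum real_polynomial_function.intros(4))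
  then have "real_polynomial_function (\<lambda>P. det (padded_gram S Y (v P)))"
    by (rule real_polynomial_function_det)
  moreover have "det (padded_gram S Y (v P0)) \<noteq> 0"
    using witness by (simp add: det_padded_gram_ne_0_iff[OF \<open>finite Y\<close>])
  ultimately have "{P. det (padded_gram S Y (v P)) = 0} \<in> null_sets lebesgue"
    by (rule null_sets_real_polynomial_zeros)
  moreover have "{P. det (padded_gram S Y (v P)) = 0}
      = {P. \<not> (\<forall>c. (\<forall>y\<in>Y. (\<Sum>j\<in>S. c j * v P j y) = 0) \<longrightarrow> (\<forall>j\<in>S. c j = 0))}"
    using det_padded_gram_ne_0_iff[OF \<open>finite Y\<close>] by blast
  ultimately show ?thesis by simp
qed

lemma null_sets_not_kruskal_rank_ge:
  fixes v :: "'P::euclidean_space \<Rightarrow> 'j::finite \<Rightarrow> 'y \<Rightarrow> real"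
  assumes pf: "\<And>j y. real_polynomial_function (\<lambda>P. v P j y)" and "finite Y"
    and witness: "\<And>S. card S \<le> K \<Longrightarrow> \<exists>P0. \<forall>c. (\<forall>y\<in>Y. (\<Sum>j\<in>S. c j * v P0 j y) = 0) \<longrightarrow> (\<forall>j\<in>S. c j = 0)"
  shows "{P. \<not> kruskal_rank_ge K (v P)} \<in> null_sets lebesgue"
proof -
  define bad where "bad S = {P. \<not> (\<forall>c. (\<forall>y\<in>Y. (\<Sum>j\<in>S. c j * v P j y) = 0) \<longrightarrow> (\<forall>j\<in>S. c j = 0))}"
    for S
  have "(\<Union>S\<in>{S. card S \<le> K}. bad S) \<in> null_sets lebesgue"
  proof (rule null_sets_UN')
    fix S :: "'j set" assume "S \<in> {S. card S \<le> K}"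
    then have "card S \<le> K" by simp
    then obtain P0 where "\<forall>c. (\<forall>y\<in>Y. (\<Sum>j\<in>S. c j * v P0 j y) = 0) \<longrightarrow> (\<forall>j\<in>S. c j = 0)"
      using witness by blast
    then show "bad S \<in> null_sets lebesgue"
      unfolding bad_def by (intro null_sets_dependent_on_samples[OF pf \<open>finite Y\<close>]) blast
  qed (simp add: countable_finite)
  moreover have "{P. \<not> kruskal_rank_ge K (v P)} \<subseteq> (\<Union>S\<in>{S. card S \<le> K}. bad S)"
    by (force simp: kruskal_rank_ge_def bad_def fun_eq_iff)
  ultimately show ?thesis using null_sets_completion_subset by blast
qed

section \<open>Generic Kruskal ranks of the weights\<close>

lemma vandermonde_sum_eq_0:
  fixes L :: "real set" and d :: "real \<Rightarrow> real"
  assumes "finite L" "card L \<le> n" "\<And>e. e < n \<Longrightarrow> (\<Sum>l\<in>L. d l * l^e) = 0" "l0 \<in> L"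
  shows "d l0 = 0"
proof -
  define q where "q = (\<Prod>\<mu>\<in>L - {l0}. [:-\<mu>, 1:])"
  have pq: "poly q x = (\<Prod>\<mu>\<in>L - {l0}. x - \<mu>)" for x by (simp add: q_def poly_prod)
  have "degree q = card (L - {l0})"
    unfolding q_def by (subst degree_prod_sum_eq) simp_all
  then have dq: "degree q < n" using assms(1,2,4) card_Diff1_less[of L l0] by simp
  have "(\<Sum>l\<in>L. d l * poly q l) = d l0 * poly q l0"
    using assms(1,4) by (subst sum.remove[of _ l0]) (auto simp: pq intro!: sum.neutral)
  moreover have "(\<Sum>l\<in>L. d l * poly q l) = (\<Sum>e\<le>degree q. coeff q e * (\<Sum>l\<in>L. d l * l^e))"
    by (simp add: poly_altdef sum_distrib_left mult_ac sum.swap[of _ L])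
  moreover have "\<dots> = 0" using assms(3) dq by (intro sum.neutral) auto
  moreover have "poly q l0 \<noteq> 0" unfolding pq using assms(1) by auto
  ultimately show ?thesis by simp
qed

lemma polyfun_coeffs_eq_0_if_zero_on_nats:
  fixes K :: "nat \<Rightarrow> real"
  assumes "\<And>u::nat. u \<le> p \<Longrightarrow> (\<Sum>e\<le>p. K e * (real u)^e) = 0" "e \<le> p"
  shows "K e = 0"
proof (rule ccontr)
  assume "K e \<noteq> 0"
  then have "finite {x::real. (\<Sum>e\<le>p. K e * x^e) = 0}" "card {x::real. (\<Sum>e\<le>p. K e * x^e) = 0} \<le> p"
    using polyfun_roots_finite polyfun_roots_card assms(2) by blast+
  moreover have "real ` {0..p} \<subseteq> {x::real. (\<Sum>e\<le>p. K e * x^e) = 0}" using assms(1) by auto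
  ultimately have "card (real ` {0..p}) \<le> p" using card_mono le_trans by blast
  then show False by (simp add: card_image)
qed

text \<open>Witness for the genericity of the rows of \<open>W1\<close>: the \<open>(d - 1) p + 1\<close> vectors \<open>e i0\<close> (index
  \<open>None\<close>) and \<open>e i0 + l e i\<close> (index \<open>Some (i, l)\<close>, \<open>i \<noteq> i0\<close>, \<open>1 \<le> l \<le> p\<close>), whose \<open>p\<close>-th powers
  are linearly independent already on the finitely many sample points \<open>e i0 + u e i\<close>, \<open>0 \<le> u \<le> p\<close>.\<close>
definition star_index :: "'d \<Rightarrow> nat \<Rightarrow> ('d \<times> nat) option set" where
  "star_index i0 p = insert None (Some ` ((UNIV - {i0}) \<times> {1..p}))"

definition star_vec :: "'d::finite \<Rightarrow> ('d \<times> nat) option \<Rightarrow> real^'d" where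
  "star_vec i0 \<tau> = (case \<tau> of None \<Rightarrow> axis i0 1 | Some (i, l) \<Rightarrow> axis i0 1 + real l *\<^sub>R axis i 1)"

definition star_samples :: "'d::finite \<Rightarrow> nat \<Rightarrow> (real^'d) set" where
  "star_samples i0 p = insert (axis i0 1) ((\<lambda>(i, u). axis i0 1 + real u *\<^sub>R axis i 1) ` ((UNIV - {i0}) \<times> {0..p}))"

lemma card_star_index: "card (star_index (i0::'d::finite) p) = (CARD('d) - 1) * p + 1"
  by (simp add: star_index_def card_image card_cartesian_product)

lemma star_vec_inner_sample:
  assumes "\<tau> \<in> star_index i0 p" "i \<noteq> i0"
  shows "star_vec i0 \<tau> \<bullet> (axis i0 1 + u *\<^sub>R axis i 1) = 1 + star_vec i0 \<tau> $ i * u"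
  using assms by (auto simp: star_vec_def star_index_def inner_add_right inner_axis) (auto simp: axis_def split: if_splits)

lemma star_vec_inner_center:
  assumes "\<tau> \<in> star_index i0 p"
  shows "star_vec i0 \<tau> \<bullet> axis i0 1 = 1"
  using assms by (auto simp: star_vec_def star_index_def inner_axis) (auto simp: axis_def split: if_splits)

lemma star_power_moments_eq_0:
  fixes c :: "('d::finite \<times> nat) option \<Rightarrow> real"
  assumes T: "T \<subseteq> star_index i0 p" and i: "i \<noteq> i0" and "e \<le> p"
    and z: "\<forall>y\<in>star_samples i0 p. (\<Sum>\<tau>\<in>T. c \<tau> * (star_vec i0 \<tau> \<bullet> y)^p) = 0"
  shows "(\<Sum>\<tau>\<in>T. c \<tau> * (star_vec i0 \<tau> $ i)^e) = 0"
proof -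
  define B where "B \<tau> = star_vec i0 \<tau> $ i" for \<tau>
  define K where "K e = of_nat (p choose e) * (\<Sum>\<tau>\<in>T. c \<tau> * B \<tau> ^ e)" for e
  have "(\<Sum>e\<le>p. K e * (real u)^e) = 0" if "u \<le> p" for u
  proof -
    have "axis i0 1 + real u *\<^sub>R axis i 1 \<in> star_samples i0 p" using that i by (force simp: star_samples_def)
    then have "0 = (\<Sum>\<tau>\<in>T. c \<tau> * (star_vec i0 \<tau> \<bullet> (axis i0 1 + real u *\<^sub>R axis i 1))^p)"
      using z by auto
    also have "\<dots> = (\<Sum>\<tau>\<in>T. c \<tau> * (1 + B \<tau> * real u)^p)"
      using T by (intro sum.cong) (auto simp: B_def star_vec_inner_sample[OF _ i])
    also have "\<dots> = (\<Sum>\<tau>\<in>T. \<Sum>e\<le>p. c \<tau> * (of_nat (p choose e) * (B \<tau> * real u)^e))"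
      using binomial_ring[of "B _ * real u" 1 p] by (simp add: add.commute sum_distrib_left)
    also have "\<dots> = (\<Sum>e\<le>p. K e * (real u)^e)"
      by (subst sum.swap) (simp add: K_def sum_distrib_left sum_distrib_right power_mult_distrib mult_ac)
    finally show ?thesis by simp
  qed
  then have "K e = 0" using polyfun_coeffs_eq_0_if_zero_on_nats assms(3) by blast
  then show ?thesis using assms(3) by (simp add: K_def B_def)
qed

lemma star_power_coeff_Some_eq_0:
  fixes c :: "('d::finite \<times> nat) option \<Rightarrow> real"
  assumes T: "T \<subseteq> star_index i0 p" and "Some (i, l) \<in> T"
    and z: "\<forall>y\<in>star_samples i0 p. (\<Sum>\<tau>\<in>T. c \<tau> * (star_vec i0 \<tau> \<bullet> y)^p) = 0"
  shows "c (Some (i, l)) = 0"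
proof -
  have i: "i \<noteq> i0" and l: "1 \<le> l" "l \<le> p" using assms(1,2) by (auto simp: star_index_def)
  have finT: "finite T" using T by (rule finite_subset) (simp add: star_index_def)
  define Ls where "Ls = {l. Some (i, l) \<in> T}"
  have Ls: "Ls \<subseteq> {1..p}" using T i by (auto simp: Ls_def star_index_def)
  have power_sums: "(\<Sum>x\<in>real ` Ls. (c (Some (i, nat \<lfloor>x\<rfloor>)) * x) * x^e) = 0" if "e < p" for e
  proof -
    have "(\<Sum>x\<in>real ` Ls. (c (Some (i, nat \<lfloor>x\<rfloor>)) * x) * x^e) = (\<Sum>l\<in>Ls. c (Some (i, l)) * real l ^ Suc e)"
      by (simp add: sum.reindex mult.assoc)
    also have "\<dots> = (\<Sum>\<tau>\<in>(\<lambda>l. Some (i, l)) ` Ls. c \<tau> * (star_vec i0 \<tau> $ i) ^ Suc e)"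
      using i by (simp add: sum.reindex inj_on_def star_vec_def axis_def)
    also have "\<dots> = (\<Sum>\<tau>\<in>T. c \<tau> * (star_vec i0 \<tau> $ i) ^ Suc e)"
      using i by (intro sum.mono_neutral_left[OF finT])
        (auto simp: Ls_def star_vec_def axis_def split: option.splits)
    also have "\<dots> = 0" using star_power_moments_eq_0[OF T i _ z, of "Suc e"] that by simp
    finally show ?thesis .
  qed
  have "card (real ` Ls) \<le> card Ls" using card_image_le[OF finite_subset[OF Ls]] by simp
  also have "\<dots> \<le> p" using card_mono[OF _ Ls] by simp
  finally have "c (Some (i, nat \<lfloor>real l\<rfloor>)) * real l = 0"
    using finite_subset[OF Ls] assms(2) power_sums
    by (intro vandermonde_sum_eq_0[where L = "real ` Ls" and n = p and d = "\<lambda>x. c (Some (i, nat \<lfloor>x\<rfloor>)) * x"])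
      (simp_all add: Ls_def)
  then show ?thesis using l by simp
qed

lemma star_powers_independent:
  fixes c :: "('d::finite \<times> nat) option \<Rightarrow> real"
  assumes T: "T \<subseteq> star_index i0 p"
    and z: "\<forall>y\<in>star_samples i0 p. (\<Sum>\<tau>\<in>T. c \<tau> * (star_vec i0 \<tau> \<bullet> y)^p) = 0"
  shows "\<forall>\<tau>\<in>T. c \<tau> = 0"
proof -
  have Some: "c \<tau> = 0" if "\<tau> \<in> T" "\<tau> \<noteq> None" for \<tau>
    using that star_power_coeff_Some_eq_0[OF T _ z] by (cases \<tau>) auto
  have "star_vec i0 \<tau> \<bullet> axis i0 1 = 1" if "\<tau> \<in> T" for \<tau>
    using T that star_vec_inner_center by blast
  then have "(\<Sum>\<tau>\<in>T. c \<tau>) = (\<Sum>\<tau>\<in>T. c \<tau> * (star_vec i0 \<tau> \<bullet> axis i0 1)^p)" by simp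
  also have "\<dots> = 0" using z by (simp add: star_samples_def)
  finally have sum0: "(\<Sum>\<tau>\<in>T. c \<tau>) = 0" .
  have "(\<Sum>\<tau>\<in>T. c \<tau>) = c None" if "None \<in> T"
    using that Some finite_subset[OF T] by (subst sum.remove[of _ None]) (auto simp: star_index_def)
  then show ?thesis using Some sum0 by (metis (full_types))
qed

lemma null_sets_columns_not_kruskal_rank_ge:
  assumes "K \<le> CARD('d2::finite)"
  shows "{P :: (real^'d0::finite^'d1::finite) \<times> (real^'d1^'d2).
           \<not> kruskal_rank_ge K (\<lambda>j k. snd P $ k $ j)} \<in> null_sets lebesgue"
proof (rule null_sets_not_kruskal_rank_ge[where Y = UNIV])
  fix j :: 'd1 and k :: 'd2
  have "linear (\<lambda>P :: (real^'d0^'d1) \<times> (real^'d1^'d2). snd P $ k $ j)" by (rule linearI) auto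
  then show "real_polynomial_function (\<lambda>P :: (real^'d0^'d1) \<times> (real^'d1^'d2). snd P $ k $ j)"
    by (simp add: linear_conv_bounded_linear real_polynomial_function.intros)
next
  fix S :: "'d1 set" assume "card S \<le> K"
  then obtain \<iota> :: "'d1 \<Rightarrow> 'd2" where \<iota>: "inj_on \<iota> S"
    using card_le_inj[of S "UNIV :: 'd2 set"] assms by auto
  define W2 :: "real^'d1^'d2" where "W2 = (\<chi> k j. if j \<in> S \<and> k = \<iota> j then 1 else 0)"
  have eq: "(\<Sum>j\<in>S. c j * W2 $ \<iota> j0 $ j) = (\<Sum>j\<in>S. if j = j0 then c j else 0)" if "j0 \<in> S" for c j0
    using \<iota> that by (intro sum.cong) (auto simp: W2_def inj_on_def)
  show "\<exists>P0 :: (real^'d0^'d1) \<times> (real^'d1^'d2).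
      \<forall>c. (\<forall>k\<in>UNIV. (\<Sum>j\<in>S. c j * snd P0 $ k $ j) = 0) \<longrightarrow> (\<forall>j\<in>S. c j = 0)"
  proof (intro exI[of _ "(0, W2)"] allI impI ballI)
    fix c j0 assume c: "\<forall>k\<in>UNIV. (\<Sum>j\<in>S. c j * snd (0 :: real^'d0^'d1, W2) $ k $ j) = 0"
      and j0: "j0 \<in> S"
    have "c j0 = (\<Sum>j\<in>S. c j * W2 $ \<iota> j0 $ j)" using eq[OF j0] j0 by simp
    also have "\<dots> = 0" using c by simp
    finally show "c j0 = 0" .
  qed
qed simp

lemma null_sets_row_powers_not_kruskal_rank_ge:
  assumes "K \<le> (CARD('d0::finite) - 1) * p + 1"
  shows "{P :: (real^'d0^'d1::finite) \<times> (real^'d1^'d2::finite).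
           \<not> kruskal_rank_ge K (\<lambda>j y. (fst P $ j \<bullet> y)^p)} \<in> null_sets lebesgue"
proof -
  fix i0 :: 'd0
  show ?thesis
  proof (rule null_sets_not_kruskal_rank_ge[where Y = "star_samples i0 p"])
    fix j :: 'd1 and y :: "real^'d0"
    have "linear (\<lambda>P :: (real^'d0^'d1) \<times> (real^'d1^'d2). fst P $ j \<bullet> y)"
      by (rule linearI) (auto simp: inner_add_left)
    then show "real_polynomial_function (\<lambda>P :: (real^'d0^'d1) \<times> (real^'d1^'d2). (fst P $ j \<bullet> y)^p)"
      by (simp add: linear_conv_bounded_linear real_polynomial_function.intros real_polynomial_function_power)
  next
    fix S :: "'d1 set" assume "card S \<le> K"
    then have "card S \<le> card (star_index i0 p)" using assms card_star_index[of i0 p] by simp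
    then obtain \<iota> where \<iota>: "\<iota> ` S \<subseteq> star_index i0 p" "inj_on \<iota> S"
      using card_le_inj[of S "star_index i0 p"] by (auto simp: star_index_def)
    define W1 :: "real^'d0^'d1" where "W1 = (\<chi> j. if j \<in> S then star_vec i0 (\<iota> j) else 0)"
    have "\<forall>j\<in>S. c j = 0" if c: "\<forall>y\<in>star_samples i0 p. (\<Sum>j\<in>S. c j * (W1 $ j \<bullet> y)^p) = 0" for c
    proof -
      define c' where "c' \<tau> = c (the_inv_into S \<iota> \<tau>)" for \<tau>
      have "(\<Sum>\<tau>\<in>\<iota> ` S. c' \<tau> * (star_vec i0 \<tau> \<bullet> y)^p) = (\<Sum>j\<in>S. c j * (W1 $ j \<bullet> y)^p)" for y
        using \<iota>(2) by (simp add: sum.reindex c'_def W1_def the_inv_into_f_f cong: sum.cong)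
      then have "\<forall>\<tau>\<in>\<iota> ` S. c' \<tau> = 0" using c by (intro star_powers_independent[OF \<iota>(1)]) simp
      then show ?thesis using \<iota>(2) by (simp add: c'_def the_inv_into_f_f)
    qed
    then show "\<exists>P0 :: (real^'d0^'d1) \<times> (real^'d1^'d2).
        \<forall>c. (\<forall>y\<in>star_samples i0 p. (\<Sum>j\<in>S. c j * (fst P0 $ j \<bullet> y)^p) = 0) \<longrightarrow> (\<forall>j\<in>S. c j = 0)"
      by (intro exI[of _ "(W1, 0)"]) simp
  qed (simp add: star_samples_def)
qed

definition hpnn2_kruskal_generic :: "nat \<Rightarrow> nat \<Rightarrow> nat \<Rightarrow> nat \<Rightarrow> real^'d0^'d1 \<Rightarrow> real^'d1^'d2 \<Rightarrow> bool"
  where "hpnn2_kruskal_generic m K p q W1 W2 \<longleftrightarrow>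
    kruskal_rank_ge m (\<lambda>j k. W2 $ k $ j) \<and> kruskal_rank_ge K (\<lambda>j y. (W1 $ j \<bullet> y)^p)
      \<and> kruskal_rank_ge K (\<lambda>j y. (W1 $ j \<bullet> y)^q)"

lemma null_sets_not_hpnn2_kruskal_generic:
  assumes "m \<le> CARD('d2::finite)" "K \<le> (CARD('d0::finite) - 1) * p + 1" "K \<le> (CARD('d0) - 1) * q + 1"
  shows "{(W1 :: real^'d0^'d1::finite, W2 :: real^'d1^'d2). \<not> hpnn2_kruskal_generic m K p q W1 W2}
           \<in> null_sets lebesgue"
proof -
  have "{(W1 :: real^'d0^'d1, W2 :: real^'d1^'d2). \<not> hpnn2_kruskal_generic m K p q W1 W2}
      = {P. \<not> kruskal_rank_ge m (\<lambda>j k. snd P $ k $ j)} \<union> {P. \<not> kruskal_rank_ge K (\<lambda>j y. (fst P $ j \<bullet> y)^p)}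
        \<union> {P. \<not> kruskal_rank_ge K (\<lambda>j y. (fst P $ j \<bullet> y)^q)}"
    by (auto simp: hpnn2_kruskal_generic_def)
  also have "\<dots> \<in> null_sets lebesgue"
    using assms by (intro null_sets.Un null_sets_columns_not_kruskal_rank_ge null_sets_row_powers_not_kruskal_rank_ge)
  finally show ?thesis .
qed

section \<open>Identifiability\<close>

lemma power_inner_eq_imp_scaleR:
  fixes u w :: "'a::real_inner"
  assumes "1 \<le> p" "w \<noteq> 0" "\<And>y. (u \<bullet> y)^p = \<beta> * (w \<bullet> y)^p"
  shows "\<exists>t. u = t *\<^sub>R w \<and> \<beta> = t^p"
proof -
  define t where "t = (u \<bullet> w) / (w \<bullet> w)"
  define z where "z = u - t *\<^sub>R w"
  have ww: "w \<bullet> w \<noteq> 0" using assms(2) by simp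
  have wz: "w \<bullet> z = 0" using ww by (simp add: z_def t_def inner_diff_right inner_commute)
  have "(u \<bullet> z)^p = 0" using assms(3)[of z] wz assms(1) by (simp add: inner_commute)
  then have "z \<bullet> z = 0" using wz by (simp add: z_def inner_diff_left)
  then have ut: "u = t *\<^sub>R w" by (simp add: z_def)
  have "t^p * (w \<bullet> w)^p = \<beta> * (w \<bullet> w)^p" using assms(3)[of w] ut by (simp add: power_mult_distrib)
  then have "\<beta> = t^p" using ww by simp
  then show ?thesis using ut by blast
qed

lemma neuron_rescaling_from_factors:
  fixes w w' :: "'a::real_inner"
  assumes "1 \<le> p" "1 \<le> q" "w \<noteq> 0"
    and "(\<lambda>y. (w' \<bullet> y)^p) = \<beta> *\<^sub>R (\<lambda>y. (w \<bullet> y)^p)" "(\<lambda>y. (w' \<bullet> y)^q) = \<gamma> *\<^sub>R (\<lambda>y. (w \<bullet> y)^q)"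
    and "\<alpha> * \<beta> * \<gamma> = 1"
  shows "\<exists>t. t \<noteq> 0 \<and> w' = t *\<^sub>R w \<and> \<alpha> = 1 / t^(p + q)"
proof -
  have "(w' \<bullet> y)^p = \<beta> * (w \<bullet> y)^p" for y using fun_cong[OF assms(4), of y] by simp
  then obtain t where t: "w' = t *\<^sub>R w" "\<beta> = t^p"
    using power_inner_eq_imp_scaleR[OF assms(1,3)] by blast
  have "(w' \<bullet> y)^q = \<gamma> * (w \<bullet> y)^q" for y using fun_cong[OF assms(5), of y] by simp
  then obtain t' where t': "w' = t' *\<^sub>R w" "\<gamma> = t'^q"
    using power_inner_eq_imp_scaleR[OF assms(2,3)] by blast
  have "t' = t" using t(1) t'(1) assms(3) by (simp add: scaleR_cancel_right)
  then have "\<alpha> * t^(p + q) = 1" using assms(6) t(2) t'(2) by (simp add: power_add mult.assoc)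
  moreover have "t \<noteq> 0"
  proof
    assume "t = 0"
    then have "\<alpha> * t^(p + q) = 0" using assms(1) by simp
    then show False using \<open>\<alpha> * t^(p + q) = 1\<close> by simp
  qed
  ultimately show ?thesis using t(1) by (intro exI[of _ t]) (auto simp: eq_divide_eq)
qed

definition diag_mat :: "('n \<Rightarrow> real) \<Rightarrow> real^'n^'n" where
  "diag_mat d = (\<chi> i j. if i = j then d i else 0)"

definition perm_mat :: "('n \<Rightarrow> 'n) \<Rightarrow> real^'n^'n" where
  "perm_mat \<pi> = (\<chi> i j. if j = \<pi> i then 1 else 0)"

lemma mult_diag_mat_component: "(A ** diag_mat d) $ k $ j = A $ k $ j * d (j::'n::finite)"
  by (simp add: diag_mat_def matrix_matrix_mult_def sum_UNIV_eq_single[of j])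

lemma diag_mat_mult_row: "(diag_mat d ** M) $ i = d i *\<^sub>R M $ (i::'n::finite)"
  by (simp add: diag_mat_def matrix_matrix_mult_def vec_eq_iff sum_UNIV_eq_single[of i])

lemma perm_mat_mult_row: "(perm_mat \<pi> ** M) $ i = M $ (\<pi> i :: 'n::finite)"
  by (simp add: perm_mat_def matrix_matrix_mult_def vec_eq_iff sum_UNIV_eq_single[of "\<pi> i"])

lemma mult_transpose_perm_mat_component:
  "(M ** transpose (perm_mat \<pi>)) $ k $ j = M $ k $ (\<pi> j :: 'n::finite)"
  by (simp add: perm_mat_def matrix_matrix_mult_def transpose_def sum_UNIV_eq_single[of "\<pi> j"])

lemma diag_mat_mult: "diag_mat d ** diag_mat e = diag_mat (\<lambda>i. d i * e (i::'n::finite))"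
  by (simp add: vec_eq_iff mult_diag_mat_component) (simp add: diag_mat_def)

lemma matpow_diag_mat: "matpow (diag_mat d) k = diag_mat (\<lambda>i. d (i::'n::finite) ^ k)"
  by (induction k) (simp_all add: diag_mat_mult, simp add: diag_mat_def mat_def vec_eq_iff)

lemma matrix_inv_eq:
  fixes A B :: "real^'n^'n"
  assumes "A ** B = mat 1" "B ** A = mat 1"
  shows "matrix_inv A = B"
proof -
  have AA: "A ** matrix_inv A = mat 1 \<and> matrix_inv A ** A = mat 1"
    unfolding matrix_inv_def by (rule someI[of _ B]) (use assms in simp)
  have "matrix_inv A = matrix_inv A ** (A ** B)" using assms by simp
  also have "\<dots> = B" using AA by (simp add: matrix_mul_assoc)
  finally show ?thesis .
qed

lemma hpnn2_equiv_if_rescaled_permuted: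
  fixes W1 W1' :: "real^'d0^'d1::finite" and W2 W2' :: "real^'d1^'d2"
  assumes "bij \<pi>" "\<And>j. t j \<noteq> 0" "\<And>j. W1' $ j = t j *\<^sub>R W1 $ (\<pi> j)"
    and "\<And>j k. W2' $ k $ j = W2 $ k $ (\<pi> j) / t j ^ r"
  shows "hpnn2_equiv r W1' W2' W1 W2"
proof -
  define d where "d i = t (inv \<pi> i)" for i
  have d\<pi>: "d (\<pi> j) = t j" for j using assms(1) by (simp add: d_def bij_def)
  have "diag_mat d ** diag_mat (\<lambda>i. 1 / d i) = mat 1" "diag_mat (\<lambda>i. 1 / d i) ** diag_mat d = mat 1"
    using assms(2) by (simp_all add: diag_mat_mult d_def, simp_all add: diag_mat_def mat_def vec_eq_iff)
  then have "invertible (diag_mat d)" and inv: "matrix_inv (diag_mat d) = diag_mat (\<lambda>i. 1 / d i)"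
    by (auto simp: invertible_def intro: matrix_inv_eq)
  moreover have "is_perm_matrix (perm_mat \<pi>)"
    unfolding is_perm_matrix_def perm_mat_def using assms(1) by (auto simp: permutes_def bij_iff)
  moreover have "is_diag_matrix (diag_mat d)" by (simp add: is_diag_matrix_def diag_mat_def)
  moreover have "W1' = perm_mat \<pi> ** diag_mat d ** W1"
    by (rule vec_eq_iff[THEN iffD2])
      (simp add: matrix_mul_assoc[symmetric] perm_mat_mult_row diag_mat_mult_row d\<pi> assms(3))
  moreover have "W2' = W2 ** matpow (matrix_inv (diag_mat d)) r ** transpose (perm_mat \<pi>)"
    by (simp add: vec_eq_iff inv matpow_diag_mat mult_transpose_perm_mat_component mult_diag_mat_component
        d\<pi> assms(4) power_one_over)
  ultimately show ?thesis unfolding hpnn2_equiv_def by blast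
qed

lemma hpnn2_component: "hpnn2 W1 W2 r x $ k = (\<Sum>j\<in>UNIV. W2 $ k $ j * (W1 $ j \<bullet> x)^r)"
  by (simp add: hpnn2_def rho_def matrix_vector_mult_def matrix_vector_mul_component[symmetric])

lemma sum_inner_column:
  fixes W :: "real^'n::finite^'m::finite"
  shows "(\<Sum>j\<in>UNIV. (column j W \<bullet> u) * F j) = (\<Sum>k\<in>UNIV. u $ k * (\<Sum>j\<in>UNIV. W $ k $ j * F j))"
proof -
  have "(\<Sum>j\<in>UNIV. (column j W \<bullet> u) * F j) = (\<Sum>j\<in>UNIV. \<Sum>k\<in>UNIV. u $ k * (W $ k $ j * F j))"
    by (simp add: column_def inner_vec_def sum_distrib_left sum_distrib_right mult_ac)
  also have "\<dots> = (\<Sum>k\<in>UNIV. u $ k * (\<Sum>j\<in>UNIV. W $ k $ j * F j))"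
    by (subst sum.swap) (simp add: sum_distrib_left)
  finally show ?thesis .
qed

lemma hpnn2_tensor_identity:
  fixes W1 W1' :: "real^'d0::finite^'d1::finite" and W2 W2' :: "real^'d1^'d2::finite"
  assumes "hpnn2 W1' W2' r = hpnn2 W1 W2 r" "p + q = r"
  shows "(\<Sum>j\<in>UNIV. (column j W2 \<bullet> u) * (W1 $ j \<bullet> y)^p * (W1 $ j \<bullet> z)^q)
       = (\<Sum>j\<in>UNIV. (column j W2' \<bullet> u) * (W1' $ j \<bullet> y)^p * (W1' $ j \<bullet> z)^q)"
proof -
  have "(\<Sum>j\<in>UNIV. W2 $ k $ j * (W1 $ j \<bullet> y)^p * (W1 $ j \<bullet> z)^q)
      = (\<Sum>j\<in>UNIV. W2' $ k $ j * (W1' $ j \<bullet> y)^p * (W1' $ j \<bullet> z)^q)" for k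
    by (rule power_sum_polarization[OF _ assms(2)]) (simp add: assms(1) hpnn2_component[symmetric])
  then show ?thesis by (simp add: mult.assoc sum_inner_column)
qed

lemma hpnn2_equiv_if_kruskal_ranks:
  fixes W1 W1' :: "real^'d0::finite^'d1::finite" and W2 W2' :: "real^'d1^'d2::finite"
  assumes same: "hpnn2 W1' W2' r = hpnn2 W1 W2 r" and pq: "1 \<le> p" "1 \<le> q" "p + q = r"
    and generic: "hpnn2_kruskal_generic m K p q W1 W2"
    and bounds: "2 * CARD('d1) + 2 \<le> m + K + K" "m \<le> CARD('d1)" "K \<le> CARD('d1)" "1 \<le> K"
  shows "hpnn2_equiv r W1' W2' W1 W2"
proof -
  have KA: "kruskal_rank_ge m (\<lambda>j k. W2 $ k $ j)" and KB: "kruskal_rank_ge K (\<lambda>j y. (W1 $ j \<bullet> y)^p)"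
    and KC: "kruskal_rank_ge K (\<lambda>j y. (W1 $ j \<bullet> y)^q)"
    using generic by (simp_all add: hpnn2_kruskal_generic_def)
  have "linear (vec_lambda :: ('d2 \<Rightarrow> real) \<Rightarrow> real^'d2)" by (rule linearI) (simp_all add: vec_eq_iff)
  then have "kruskal_rank_ge m (\<lambda>j. column j W2)"
    using kruskal_rank_ge_linear_image[OF KA, of vec_lambda UNIV] by (simp add: column_def inj_on_def vec_eq_iff fun_eq_iff)
  then obtain \<pi> where "bij \<pi>" and fac: "\<forall>j. \<exists>\<alpha> \<beta> \<gamma>. column j W2' = \<alpha> *\<^sub>R column (\<pi> j) W2
      \<and> (\<lambda>y. (W1' $ j \<bullet> y)^p) = \<beta> *\<^sub>R (\<lambda>y. (W1 $ \<pi> j \<bullet> y)^p)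
      \<and> (\<lambda>y. (W1' $ j \<bullet> y)^q) = \<gamma> *\<^sub>R (\<lambda>y. (W1 $ \<pi> j \<bullet> y)^q) \<and> \<alpha> * \<beta> * \<gamma> = 1"
    using kruskal_uniqueness_fun[OF hpnn2_tensor_identity[OF same pq(3)] _ KB KC bounds(2,3,3,1)] by blast
  have "\<exists>t. t \<noteq> 0 \<and> W1' $ j = t *\<^sub>R W1 $ (\<pi> j) \<and> (\<forall>k. W2' $ k $ j = W2 $ k $ (\<pi> j) / t ^ r)" for j
  proof -
    obtain \<alpha> \<beta> \<gamma> where f: "column j W2' = \<alpha> *\<^sub>R column (\<pi> j) W2"
      "(\<lambda>y. (W1' $ j \<bullet> y)^p) = \<beta> *\<^sub>R (\<lambda>y. (W1 $ \<pi> j \<bullet> y)^p)"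
      "(\<lambda>y. (W1' $ j \<bullet> y)^q) = \<gamma> *\<^sub>R (\<lambda>y. (W1 $ \<pi> j \<bullet> y)^q)" "\<alpha> * \<beta> * \<gamma> = 1"
      using fac by blast
    have "W1 $ \<pi> j \<noteq> 0"
      using kruskal_rank_ge_nonzero[OF KB bounds(4), of "\<pi> j"] pq(1) by (auto simp: fun_eq_iff)
    then obtain t where "t \<noteq> 0" "W1' $ j = t *\<^sub>R W1 $ \<pi> j" "\<alpha> = 1 / t^r"
      using neuron_rescaling_from_factors[OF pq(1,2) _ f(2-4)] pq(3) by blast
    moreover have "W2' $ k $ j = \<alpha> * W2 $ k $ \<pi> j" for k
      using arg_cong[OF f(1), of "\<lambda>v. v $ k"] by (simp add: column_def)
    ultimately show ?thesis by auto
  qed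
  then obtain t where "\<And>j. t j \<noteq> 0" "\<And>j. W1' $ j = t j *\<^sub>R W1 $ (\<pi> j)"
    "\<And>j k. W2' $ k $ j = W2 $ k $ (\<pi> j) / t j ^ r"
    by (metis (no_types))
  then show ?thesis by (intro hpnn2_equiv_if_rescaled_permuted[OF \<open>bij \<pi>\<close>])
qed

lemma kruskal_bound_from_ceiling:
  fixes d0 d1 d2 r :: nat
  assumes "2 \<le> d0" "2 \<le> d1" "2 \<le> d2"
    and "real r \<ge> 2 * real_of_int \<lceil>(2 * real d1 - real (min d1 d2)) / (2 * real (min d1 d0) - 2)\<rceil>"
  shows "2 * d1 + 2 \<le> min d1 d2 + 2 * min d1 ((d0 - 1) * (r div 2) + 1)"
proof -
  define m where "m = min d1 d2"
  define m0 where "m0 = min d1 d0"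
  define X where "X = (2 * real d1 - real m) / (2 * real m0 - 2)"
  define p where "p = r div 2"
  have m2: "2 \<le> m" "2 \<le> m0" using assms by (auto simp: m_def m0_def)
  have "2 * \<lceil>X\<rceil> \<le> int r" using assms(4) unfolding X_def m_def m0_def by linarith
  then have "\<lceil>X\<rceil> \<le> int p" unfolding p_def by linarith
  then have "X \<le> real p" by linarith
  then have "2 * real d1 - real m \<le> real p * (2 * real m0 - 2)"
    using m2 unfolding X_def by (simp add: divide_le_eq)
  then have A: "2 * real d1 \<le> real m + 2 * real p * (real m0 - 1)" by (simp add: algebra_simps)
  have "real m0 - 1 \<le> real d0 - 1" by (simp add: m0_def)
  then have "2 * real p * (real m0 - 1) \<le> 2 * real p * (real d0 - 1)" by (intro mult_left_mono) auto
  with A have "2 * real d1 \<le> real m + 2 * ((real d0 - 1) * real p)" by (simp add: algebra_simps)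
  moreover have e: "real (d0 - 1) = real d0 - 1" using assms(1) by (simp add: of_nat_diff)
  moreover have "real (m + 2 * ((d0 - 1) * p)) = real m + 2 * ((real d0 - 1) * real p)"
    by (simp only: of_nat_add of_nat_mult e of_nat_numeral)
  ultimately have "real (2 * d1) \<le> real (m + 2 * ((d0 - 1) * p))" by simp
  then have "2 * d1 \<le> m + 2 * ((d0 - 1) * p)" by (simp only: of_nat_le_iff)
  then show ?thesis using m2 unfolding m_def[symmetric] p_def[symmetric] by (simp add: min_def)
qed

theorem mainTheorem3:
  assumes "CARD('d0::finite) \<ge> 2" and "CARD('d1::finite) \<ge> 2" and "CARD('d2::finite) \<ge> 2"
    and "r \<ge> 2"
    and "real r \<ge> 2 * real_of_int \<lceil>(2 * real CARD('d1) - real (min CARD('d1) CARD('d2)))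
                                   / (2 * real (min CARD('d1) CARD('d0)) - 2)\<rceil>"
  shows "hpnn2_identifiable TYPE('d0) TYPE('d1) TYPE('d2) r"
proof -
  define p where "p = r div 2"
  define q where "q = r - p"
  define m where "m = min CARD('d1) CARD('d2)"
  define K where "K = min CARD('d1) ((CARD('d0) - 1) * p + 1)"
  have pq: "1 \<le> p" "1 \<le> q" "p + q = r" using assms(4) by (auto simp: p_def q_def)
  have "p \<le> q" by (simp add: p_def q_def)
  then have "(CARD('d0) - 1) * p \<le> (CARD('d0) - 1) * q" by simp
  then have "K \<le> (CARD('d0) - 1) * p + 1" "K \<le> (CARD('d0) - 1) * q + 1" unfolding K_def by linarith+
  then have "{(W1 :: real^'d0^'d1, W2 :: real^'d1^'d2). \<not> hpnn2_kruskal_generic m K p q W1 W2}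
      \<in> null_sets lebesgue"
    by (intro null_sets_not_hpnn2_kruskal_generic) (auto simp: m_def)
  moreover have "hpnn2_unique r W1 W2" if "hpnn2_kruskal_generic m K p q W1 W2"
    for W1 :: "real^'d0^'d1" and W2 :: "real^'d1^'d2"
    using hpnn2_equiv_if_kruskal_ranks[OF _ pq that] kruskal_bound_from_ceiling[OF assms(1-3,5)] assms(2)
    by (simp add: hpnn2_unique_def m_def K_def p_def)
  ultimately show ?thesis unfolding hpnn2_identifiable_def by blast
qed

end
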